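(* The set $\mathrm{LS}_\lambda(I)$ of maps $f\in C_\lambda(I)$ having the s-limit shadowing property is dense in $C_\lambda(I)$.
   Context: $I=[0,1]$, $\lambda$ Lebesgue measure; $C_\lambda(I)$ is the set of continuous $\lambda$-preserving maps $I\to I$, with the uniform metric. For $\delta>0$, $(x_n)_{n\ge0}\subset I$ is a $\delta$-pseudo orbit of $f$ if $|f(x_n)-x_{n+1}|<\delta$ for all $n$; it is an asymptotic pseudo orbit if $|f(x_n)-x_{n+1}|\to0$; an asymptotic $\delta$-pseudo orbit is both. A point $x$ $\varepsilon$-traces $(y_n)$ if $|f^n(x)-y_n|<\varepsilon$ for all $n\ge0$. $f$ has the s-limit shadowing property if for every $\varepsilon>0$ there is $\delta>0$ such that (1) every $\delta$-pseudo orbit is $\varepsilon$-traced by some point, and (2) for every asymptotic $\delta$-pseudo orbit $(y_n)$ there is $x\in I$ which $\varepsilon$-traces $(y_n)$ and satisfies $\lim_{n\to\infty}|y_n-f^n(x)|=0$. *)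

theory Defs
  imports "HOL-Analysis.Analysis"
begin

text \<open>The unit interval I = [0,1] as a subset of the reals; self-maps of I are
  represented as functions real => real, only their values on I matter.\<close>

abbreviation unitI :: "real set" where "unitI \<equiv> {0..1}"

definition lambda_preserving :: "(real \<Rightarrow> real) \<Rightarrow> bool" where
  "lambda_preserving f \<longleftrightarrow>
     (\<forall>A. A \<in> sets lebesgue \<and> A \<subseteq> unitI \<longrightarrow>
        {x \<in> unitI. f x \<in> A} \<in> sets lebesgue \<and>
        measure lebesgue {x \<in> unitI. f x \<in> A} = measure lebesgue A)"

definition C_lambda :: "(real \<Rightarrow> real) set" where
  "C_lambda = {f. continuous_on unitI f \<and> f ` unitI \<subseteq> unitI \<and> lambda_preserving f}"

definition unif_dist :: "(real \<Rightarrow> real) \<Rightarrow> (real \<Rightarrow> real) \<Rightarrow> real" where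
  "unif_dist f g = (SUP x\<in>unitI. \<bar>f x - g x\<bar>)"

definition pseudo_orbit :: "(real \<Rightarrow> real) \<Rightarrow> real \<Rightarrow> (nat \<Rightarrow> real) \<Rightarrow> bool" where
  "pseudo_orbit f \<delta> y \<longleftrightarrow> (\<forall>n. y n \<in> unitI) \<and> (\<forall>n. \<bar>f (y n) - y (Suc n)\<bar> < \<delta>)"

definition asymptotic_pseudo_orbit :: "(real \<Rightarrow> real) \<Rightarrow> (nat \<Rightarrow> real) \<Rightarrow> bool" where
  "asymptotic_pseudo_orbit f y \<longleftrightarrow> (\<forall>n. y n \<in> unitI) \<and>
     ((\<lambda>n. \<bar>f (y n) - y (Suc n)\<bar>) \<longlonglongrightarrow> 0)"

definition traces :: "(real \<Rightarrow> real) \<Rightarrow> real \<Rightarrow> real \<Rightarrow> (nat \<Rightarrow> real) \<Rightarrow> bool" where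
  "traces f \<epsilon> x y \<longleftrightarrow> (\<forall>n. \<bar>(f ^^ n) x - y n\<bar> < \<epsilon>)"

definition s_limit_shadowing :: "(real \<Rightarrow> real) \<Rightarrow> bool" where
  "s_limit_shadowing f \<longleftrightarrow>
     (\<forall>\<epsilon>>0. \<exists>\<delta>>0.
        (\<forall>y. pseudo_orbit f \<delta> y \<longrightarrow> (\<exists>x\<in>unitI. traces f \<epsilon> x y)) \<and>
        (\<forall>y. pseudo_orbit f \<delta> y \<and> asymptotic_pseudo_orbit f y \<longrightarrow>
           (\<exists>x\<in>unitI. traces f \<epsilon> x y \<and> ((\<lambda>n. \<bar>y n - (f ^^ n) x\<bar>) \<longlonglongrightarrow> 0))))"

definition LS_lambda :: "(real \<Rightarrow> real) set" where
  "LS_lambda = {f \<in> C_lambda. s_limit_shadowing f}"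

end

theory Submission
  imports Defs "HOL-Probability.Distribution_Functions"
begin

text \<open>Fix \<open>f \<in> C_lambda\<close> and a large \<open>N\<close>. Cut \<open>I\<close> into \<open>N + 1\<close> cells centred at the grid points
  \<open>i/N\<close> and let \<open>m i k\<close> be the measure of the part of cell \<open>i\<close> that \<open>f\<close> maps into \<open>[k/N, (k+1)/N]\<close>;
  as \<open>f\<close> preserves \<open>\<lambda>\<close>, \<open>\<Sum>i. m i k = 1/N\<close>. On each half of each cell the new map \<open>g\<close> is a zigzag
  of three monotone legs with slopes at least 2 which spreads the half cell's share of the masses
  \<open>m i k\<close> uniformly over the levels \<open>[k/N, (k+1)/N]\<close>. Summing over the cells shows that \<open>g\<close> preserves
  \<open>\<lambda>\<close>, and \<open>g\<close> differs from \<open>f\<close> by at most the oscillation of \<open>f\<close> on a cell plus \<open>1/N\<close>.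

  The zigzags are arranged so that every point lies on a monotone piece of \<open>g\<close> of length at least
  some \<open>\<gamma> > 0\<close> that expands by 2 and has grid points as end values, and so that \<open>g\<close> is symmetric
  about every inner grid point. These two properties give s-limit shadowing: pulling tolerances back
  along a pseudo orbit, a point near \<open>y (n+1)\<close> has a preimage near \<open>y n\<close>, either directly or, when
  \<open>y (n+1)\<close> lies beyond the image of the piece, as a preimage of its mirror image in the end value,
  which rejoins the orbit one step later by the symmetry. Compactness passes from finite to infinite
  pseudo orbits, and tolerances that shrink with the jumps of an asymptotic pseudo orbit give the
  limit condition.\<close>

section \<open>Shadowing for maps with expanding laps and folds\<close>

definition grid_point :: "nat \<Rightarrow> real \<Rightarrow> bool" where
  "grid_point N v \<longleftrightarrow> (\<exists>k\<le>N. v = real k / real N)"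

lemma grid_point_reflect:
  assumes "N > 0" "grid_point N v" shows "grid_point N (1 - v)"
proof -
  obtain k where k: "k \<le> N" "v = real k / real N" using assms(2) unfolding grid_point_def by auto
  have "1 - v = real (N - k) / real N" using k assms(1) by (simp add: of_nat_diff field_simps)
  then show ?thesis unfolding grid_point_def using diff_le_self by blast
qed

definition expanding_on :: "real \<Rightarrow> real \<Rightarrow> (real \<Rightarrow> real) \<Rightarrow> bool" where
  "expanding_on a b G \<longleftrightarrow>
     (\<forall>s t. a \<le> s \<longrightarrow> s \<le> t \<longrightarrow> t \<le> b \<longrightarrow> G s \<le> G t \<and> 2 * (t - s) \<le> G t - G s) \<or>
     (\<forall>s t. a \<le> s \<longrightarrow> s \<le> t \<longrightarrow> t \<le> b \<longrightarrow> G t \<le> G s \<and> 2 * (t - s) \<le> G s - G t)"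

definition expanding_lap :: "(real \<Rightarrow> real) \<Rightarrow> nat \<Rightarrow> real \<Rightarrow> real \<Rightarrow> bool" where
  "expanding_lap g N a b \<longleftrightarrow>
     continuous_on {a..b} g \<and> grid_point N (g a) \<and> grid_point N (g b) \<and> expanding_on a b g"

definition covered_by_laps :: "(real \<Rightarrow> real) \<Rightarrow> nat \<Rightarrow> real \<Rightarrow> real \<Rightarrow> real \<Rightarrow> bool" where
  "covered_by_laps g N a0 b0 \<gamma> \<longleftrightarrow>
     (\<forall>y\<in>{a0..b0}. \<exists>a b. a0 \<le> a \<and> a \<le> y \<and> y \<le> b \<and> b \<le> b0 \<and> \<gamma> \<le> b - a \<and> expanding_lap g N a b)"

definition folds_at_grid :: "(real \<Rightarrow> real) \<Rightarrow> nat \<Rightarrow> real \<Rightarrow> bool" where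
  "folds_at_grid g N w \<longleftrightarrow> (\<forall>k. 0 < k \<and> k < N \<longrightarrow> (\<forall>x\<in>unitI. \<bar>x - real k / real N\<bar> \<le> w \<longrightarrow>
      2 * (real k / real N) - x \<in> unitI \<and> g (2 * (real k / real N) - x) = g x))"

definition folded_preimage :: "(real \<Rightarrow> real) \<Rightarrow> nat \<Rightarrow> real \<Rightarrow> real set \<Rightarrow> real \<Rightarrow> bool" where
  "folded_preimage g N r S z \<longleftrightarrow> (\<exists>x\<in>S. g x = z) \<or>
     (\<exists>k. 0 < k \<and> k < N \<and> \<bar>z - real k / real N\<bar> \<le> 2 * r \<and> (\<exists>x\<in>S. g x = 2 * (real k / real N) - z))"

lemma covered_by_laps_mono:
  "covered_by_laps g N a b \<gamma> \<Longrightarrow> \<gamma>' \<le> \<gamma> \<Longrightarrow> covered_by_laps g N a b \<gamma>'"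
  unfolding covered_by_laps_def by (meson order_trans)

lemma folded_preimage_mono: "folded_preimage g N r S z \<Longrightarrow> S \<subseteq> T \<Longrightarrow> folded_preimage g N r T z"
  unfolding folded_preimage_def by blast

text \<open>If \<open>z\<close> lies beyond the value at an end of the lap, that end was not cut, so its value is
  a grid point and the mirror image of \<open>z\<close> in it is still in the range of the lap.\<close>

lemma increasing_lap_preimage:
  fixes g :: "real \<Rightarrow> real"
  assumes N: "N > 0" and ab: "a \<le> y" "y \<le> b"
    and cont: "continuous_on {a..b} g"
    and exp: "\<And>s t. a \<le> s \<Longrightarrow> s \<le> t \<Longrightarrow> t \<le> b \<Longrightarrow> g s \<le> g t \<and> 2 * (t - s) \<le> g t - g s"
    and ga: "a = y - r \<or> grid_point N (g a)" and gb: "b = y + r \<or> grid_point N (g b)"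
    and cut: "a = y - r \<or> b = y + r"
    and rng: "0 \<le> g a" "g b \<le> 1"
    and z: "0 \<le> z" "z \<le> 1" "\<bar>z - g y\<bar> \<le> 2 * r"
  shows "folded_preimage g N r {a..b} z"
  unfolding folded_preimage_def
proof -
  have ivt: "\<exists>x\<in>{a..b}. g x = v" if "g a \<le> v" "v \<le> g b" for v
    using IVT'[of g a v b, OF that] ab cont by auto
  have gya: "2 * (y - a) \<le> g y - g a" and gyb: "2 * (b - y) \<le> g b - g y" using exp ab by auto
  consider "g a \<le> z \<and> z \<le> g b" | "z > g b" | "z < g a" by linarith
  then show "(\<exists>x\<in>{a..b}. g x = z) \<or> (\<exists>k. 0 < k \<and> k < N \<and> \<bar>z - real k / real N\<bar> \<le> 2 * r \<and>
      (\<exists>x\<in>{a..b}. g x = 2 * (real k / real N) - z))"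
  proof cases
    case 1 then show ?thesis using ivt by blast
  next
    case 2
    then have "b \<noteq> y + r" using gyb z by auto
    then have "grid_point N (g b)" and a: "a = y - r" using gb cut by auto
    then obtain k where k: "k \<le> N" "g b = real k / real N" unfolding grid_point_def by auto
    have "real k / real N < 1" using 2 z k by auto
    then have "k < N" using N by (simp add: divide_less_eq)
    moreover have "0 < k" using 2 z gya gyb a rng ab k by (cases k) (auto simp: abs_le_iff)
    moreover have "g a \<le> 2 * g b - z" "2 * g b - z \<le> g b" "\<bar>z - real k / real N\<bar> \<le> 2 * r"
      using 2 z gya gyb a ab k by (auto simp: abs_le_iff)
    ultimately show ?thesis using ivt k by (intro disjI2 exI[of _ k]) auto
  next
    case 3
    then have "a \<noteq> y - r" using gya z by auto
    then have "grid_point N (g a)" and b: "b = y + r" using ga cut by auto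
    then obtain k where k: "k \<le> N" "g a = real k / real N" unfolding grid_point_def by auto
    have "g a < 1" using 3 z gya gyb b rng ab by (auto simp: abs_le_iff)
    then have "k < N" using N k by (simp add: divide_less_eq)
    moreover have "0 < k" using 3 z k by (cases k) auto
    moreover have "g a \<le> 2 * g a - z" "2 * g a - z \<le> g b" "\<bar>z - real k / real N\<bar> \<le> 2 * r"
      using 3 z gya gyb b ab k by (auto simp: abs_le_iff)
    ultimately show ?thesis using ivt k by (intro disjI2 exI[of _ k]) auto
  qed
qed

lemma cut_lap_preimage:
  fixes g :: "real \<Rightarrow> real"
  assumes N: "N > 0" and ab: "a \<le> y" "y \<le> b"
    and cont: "continuous_on {a..b} g" and exp: "expanding_on a b g"
    and ga: "a = y - r \<or> grid_point N (g a)" and gb: "b = y + r \<or> grid_point N (g b)"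
    and cut: "a = y - r \<or> b = y + r"
    and ends: "g a \<in> unitI" "g b \<in> unitI"
    and z: "z \<in> unitI" "\<bar>z - g y\<bar> \<le> 2 * r"
  shows "folded_preimage g N r {a..b} z"
  using exp unfolding expanding_on_def
proof (elim disjE)
  assume "\<forall>s t. a \<le> s \<longrightarrow> s \<le> t \<longrightarrow> t \<le> b \<longrightarrow> g s \<le> g t \<and> 2 * (t - s) \<le> g t - g s"
  then show ?thesis
    by (intro increasing_lap_preimage[OF N ab cont _ ga gb cut]) (use ends z in auto)
next
  text \<open>A decreasing lap of \<open>g\<close> is an increasing lap of \<open>1 - g\<close>, whose grid is the reflected one.\<close>
  assume "\<forall>s t. a \<le> s \<longrightarrow> s \<le> t \<longrightarrow> t \<le> b \<longrightarrow> g t \<le> g s \<and> 2 * (t - s) \<le> g s - g t"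
  then have "folded_preimage (\<lambda>x. 1 - g x) N r {a..b} (1 - z)"
    by (intro increasing_lap_preimage[OF N ab])
      (use ends z cont ga gb cut grid_point_reflect[OF N] in \<open>auto intro: continuous_intros\<close>)
  then show ?thesis
    unfolding folded_preimage_def[of "\<lambda>x. 1 - g x"]
  proof (elim disjE exE conjE)
    fix k x assume k: "0 < k" "k < N" "\<bar>(1 - z) - real k / real N\<bar> \<le> 2 * r"
      and "\<exists>x\<in>{a..b}. 1 - g x = 2 * (real k / real N) - (1 - z)"
    then obtain x where x: "x \<in> {a..b}" "1 - g x = 2 * (real k / real N) - (1 - z)" by blast
    have "real (N - k) / real N = 1 - real k / real N" using k N by (simp add: of_nat_diff field_simps)
    then have "g x = 2 * (real (N - k) / real N) - z" "\<bar>z - real (N - k) / real N\<bar> \<le> 2 * r"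
      using k x by (auto simp: abs_le_iff)
    then show ?thesis unfolding folded_preimage_def using k x by (intro disjI2 exI[of _ "N - k"]) auto
  qed (auto simp: folded_preimage_def)
qed

fun shadow_bound :: "(nat \<Rightarrow> real) \<Rightarrow> nat \<Rightarrow> real" where
  "shadow_bound r 0 = r 0"
| "shadow_bound r (Suc k) = r (Suc k) + 4 * r k"

lemma shadow_bound_le:
  assumes "\<And>k. 0 \<le> r k \<and> r k \<le> \<rho>" shows "shadow_bound r k \<le> 5 * \<rho>"
  using assms[of k] assms[of "k - 1"] by (cases k) auto

lemma funpow_continuous_on_maps:
  fixes g :: "'a::topological_space \<Rightarrow> 'a"
  assumes "continuous_on S g" and "g ` S \<subseteq> S"
  shows "continuous_on S (g^^k) \<and> (g^^k) ` S \<subseteq> S"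
proof (induction k)
  case (Suc k)
  have "continuous_on S (\<lambda>x. g ((g^^k) x))"
    by (rule continuous_on_compose2[OF assms(1)]) (use Suc in auto)
  then show ?case using Suc assms by auto
qed (auto intro: continuous_on_id)

lemma decreasing_null_majorant:
  fixes d :: "nat \<Rightarrow> real"
  assumes d0: "d \<longlonglongrightarrow> 0" and d: "\<And>k. 0 \<le> d k \<and> d k \<le> r" and r: "0 < r"
  obtains \<rho> where "\<And>k. d k \<le> \<rho> k" "\<And>k. 0 < \<rho> k \<and> \<rho> k \<le> r" "\<And>k. \<rho> (Suc k) \<le> \<rho> k" "\<rho> \<longlonglongrightarrow> 0"
proof
  define e where "e k = (SUP j\<in>{k..}. d j)" for k
  have bdd: "bdd_above (d ` {k..})" for k using d by (intro bdd_aboveI[of _ r]) auto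
  have de: "d j \<le> e k" if "k \<le> j" for j k unfolding e_def using that bdd by (intro cSUP_upper) auto
  have er: "e k \<le> r" for k unfolding e_def using d by (intro cSUP_least) auto
  have e_dec: "e (Suc k) \<le> e k" for k unfolding e_def by (rule cSUP_subset_mono) (use bdd in auto)
  have "e \<longlonglongrightarrow> 0"
  proof (rule LIMSEQ_I)
    fix \<eta> :: real assume \<eta>: "0 < \<eta>"
    obtain K where K: "\<And>j. j \<ge> K \<Longrightarrow> \<bar>d j\<bar> < \<eta>/2" using LIMSEQ_D[OF d0, of "\<eta>/2"] \<eta> by auto
    have "norm (e k - 0) < \<eta>" if "k \<ge> K" for k
    proof -
      have "d j \<le> \<eta>/2" if "j \<ge> k" for j using K[of j] that \<open>k \<ge> K\<close> by auto
      then have "e k \<le> \<eta>/2" unfolding e_def by (intro cSUP_least) auto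
      moreover have "0 \<le> e k" using de[of k k] d[of k] by auto
      ultimately show ?thesis using \<eta> by auto
    qed
    then show "\<exists>K. \<forall>k\<ge>K. norm (e k - 0) < \<eta>" by blast
  qed
  text \<open>The term \<open>r / 2^k\<close> only keeps the majorant positive.\<close>
  define \<rho> where "\<rho> k = max (r / 2^k) (e k)" for k
  show "d k \<le> \<rho> k" for k unfolding \<rho>_def using de[of k k] by auto
  show "0 < \<rho> k \<and> \<rho> k \<le> r" for k
    unfolding \<rho>_def using r er[of k] by (auto simp: less_max_iff_disj divide_le_eq)
  show "\<rho> (Suc k) \<le> \<rho> k" for k
    unfolding \<rho>_def using r e_dec[of k] by (intro max.mono) (auto simp: divide_le_eq)
  have "(\<lambda>k. r / 2^k) \<longlonglongrightarrow> 0" by (intro LIMSEQ_divide_realpow_zero) auto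
  then show "\<rho> \<longlonglongrightarrow> 0" unfolding \<rho>_def using tendsto_max[OF _ \<open>e \<longlonglongrightarrow> 0\<close>] by fastforce
qed

locale laps_and_folds =
  fixes g :: "real \<Rightarrow> real" and N :: nat and \<gamma> w :: real
  assumes N: "N > 0" and cont: "continuous_on unitI g" and maps: "g ` unitI \<subseteq> unitI"
    and laps: "covered_by_laps g N 0 1 \<gamma>" and folds: "folds_at_grid g N w"
    and \<gamma>: "0 < \<gamma>" and w: "0 < w"
begin

definition "tol = min \<gamma> w / 2"

lemma tol_bounds: "0 < tol" "2 * tol \<le> \<gamma>" "2 * tol \<le> w"
  unfolding tol_def using \<gamma> w by auto

lemma lap_preimage:
  assumes y: "y \<in> unitI" and r: "0 < r" "r \<le> tol" and z: "z \<in> unitI" "\<bar>z - g y\<bar> \<le> 2 * r"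
  shows "folded_preimage g N r (unitI \<inter> {y - r..y + r}) z"
proof -
  obtain a b where ab: "0 \<le> a" "a \<le> y" "y \<le> b" "b \<le> 1" "\<gamma> \<le> b - a" and lap: "expanding_lap g N a b"
    using laps y unfolding covered_by_laps_def by blast
  text \<open>Since the lap is longer than \<open>2r\<close>, cutting it down to \<open>[y - r, y + r]\<close> cuts at most one end.\<close>
  define a' b' where "a' = max a (y - r)" and "b' = min b (y + r)"
  have a'b': "a \<le> a'" "a' \<le> y" "y \<le> b'" "b' \<le> b" using ab r unfolding a'_def b'_def by auto
  have cut: "a' = y - r \<or> b' = y + r" using ab r tol_bounds unfolding a'_def b'_def by auto
  have cont': "continuous_on {a'..b'} g"
    using lap a'b' unfolding expanding_lap_def by (auto elim: continuous_on_subset)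
  have exp': "expanding_on a' b' g"
    using lap a'b' unfolding expanding_lap_def expanding_on_def by (meson order_trans)
  have ends: "a' = y - r \<or> grid_point N (g a')" "b' = y + r \<or> grid_point N (g b')"
    using lap unfolding expanding_lap_def a'_def b'_def by (auto simp: max_def min_def)
  have "a' \<in> unitI" "b' \<in> unitI" using a'b' ab by auto
  then have "g a' \<in> unitI" "g b' \<in> unitI" using maps by blast+
  then have "folded_preimage g N r {a'..b'} z"
    using cut_lap_preimage[OF N a'b'(2,3) cont' exp' ends cut _ _ z] by blast
  moreover have "{a'..b'} \<subseteq> unitI \<inter> {y - r..y + r}" using ab unfolding a'_def b'_def by auto
  ultimately show ?thesis by (rule folded_preimage_mono)
qed

text \<open>The tolerances \<open>r k\<close> are pulled back along \<open>y\<close> from the end: a point within \<open>r (Suc k)\<close> of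
  \<open>y (Suc k)\<close> has a preimage within \<open>r k\<close> of \<open>y k\<close> because laps expand by 2. A reflected preimage
  is off by up to \<open>4 * r k\<close> after one step, but rejoins the orbit after two steps by the fold.\<close>

lemma finite_shadowing:
  "(\<forall>k\<le>n. y k \<in> unitI \<and> 0 < r k \<and> r k \<le> tol) \<Longrightarrow>
   (\<forall>k<n. r (Suc k) + \<bar>g (y k) - y (Suc k)\<bar> \<le> 2 * r k) \<Longrightarrow>
   \<exists>x\<in>unitI. \<forall>k\<le>n. \<bar>(g^^k) x - y k\<bar> \<le> shadow_bound r k"
proof (induction n arbitrary: y r)
  case 0 then show ?case by (intro bexI[of _ "y 0"]) auto
next
  case (Suc n)
  obtain x' where x': "x' \<in> unitI" "\<forall>k\<le>n. \<bar>(g^^k) x' - y (Suc k)\<bar> \<le> shadow_bound (\<lambda>k. r (Suc k)) k"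
    using Suc.IH[of "\<lambda>k. y (Suc k)" "\<lambda>k. r (Suc k)"] Suc.prems by auto
  have x'1: "\<bar>x' - y 1\<bar> \<le> r 1" using x'(2)[rule_format, of 0] by simp
  have "r 1 + \<bar>g (y 0) - y 1\<bar> \<le> 2 * r 0" using Suc.prems(2)[rule_format, of 0] by simp
  then have x'g: "\<bar>x' - g (y 0)\<bar> \<le> 2 * r 0" using x'1 by (auto simp: abs_le_iff)
  have y0: "y 0 \<in> unitI" "0 < r 0" "r 0 \<le> tol" using Suc.prems(1) by auto
  have tail: "\<bar>(g^^Suc j) x - y (Suc j)\<bar> \<le> shadow_bound r (Suc j)"
    if "(g^^Suc j) x = (g^^j) x'" "j \<le> n" for x j
  proof -
    have "shadow_bound (\<lambda>k. r (Suc k)) j \<le> shadow_bound r (Suc j)"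
      using that Suc.prems(1) by (cases j) auto
    then show ?thesis using x'(2) that by fastforce
  qed
  have funpow_g: "(g^^Suc j) x = (g^^j) (g x)" for j x by (simp add: funpow_Suc_right del: funpow.simps)
  from lap_preimage[OF y0 x'(1) x'g] show ?case unfolding folded_preimage_def
  proof (elim disjE exE conjE bexE)
    fix x assume x: "x \<in> unitI \<inter> {y 0 - r 0..y 0 + r 0}" "g x = x'"
    have "\<bar>(g^^k) x - y k\<bar> \<le> shadow_bound r k" if "k \<le> Suc n" for k
      using that x tail funpow_g by (cases k) auto
    then show ?thesis using x(1) by blast
  next
    fix k x assume k: "0 < k" "k < N" "\<bar>x' - real k / real N\<bar> \<le> 2 * r 0"
      and x: "x \<in> unitI \<inter> {y 0 - r 0..y 0 + r 0}" "g x = 2 * (real k / real N) - x'"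
    have "\<bar>x' - real k / real N\<bar> \<le> w" using k(3) y0 tol_bounds by auto
    then have fold_x': "g (g x) = g x'" using folds k x'(1) x(2) unfolding folds_at_grid_def by auto
    have "\<bar>(g^^i) x - y i\<bar> \<le> shadow_bound r i" if "i \<le> Suc n" for i
    proof (cases i)
      case (Suc j)
      show ?thesis
      proof (cases j)
        case 0 then show ?thesis using Suc k(3) x'1 x(2) by (auto simp: abs_le_iff)
      next
        case (Suc l)
        have "(g^^Suc j) x = (g^^l) (g (g x))" using Suc by (simp only: funpow_Suc_right o_apply)
        also have "\<dots> = (g^^j) x'" using Suc fold_x' by (simp only: funpow_Suc_right o_apply)
        finally show ?thesis using tail \<open>i = Suc j\<close> that by auto
      qed
    qed (use x in auto)
    then show ?thesis using x(1) by blast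
  qed
qed

text \<open>By compactness, finite shadowing for all lengths gives one shadowing point. Tolerances that
  decrease and dominate the jumps of \<open>y\<close> satisfy the hypothesis of \<open>finite_shadowing\<close>.\<close>

lemma infinite_shadowing:
  assumes y: "\<And>k. y k \<in> unitI" and jumps: "\<And>k. \<bar>g (y k) - y (Suc k)\<bar> \<le> r k"
    and r: "\<And>k. 0 < r k \<and> r k \<le> tol" "\<And>k. r (Suc k) \<le> r k"
  shows "\<exists>x\<in>unitI. \<forall>k. \<bar>(g^^k) x - y k\<bar> \<le> shadow_bound r k"
proof -
  define K where "K n = unitI \<inter> (\<Inter>k\<le>n. unitI \<inter> (g^^k) -` {y k - shadow_bound r k .. y k + shadow_bound r k})" for n
  have "closed (unitI \<inter> (g^^k) -` {y k - shadow_bound r k .. y k + shadow_bound r k})" for k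
    using funpow_continuous_on_maps[OF cont maps] by (intro continuous_closed_preimage) auto
  then have "compact (K n)" for n
    unfolding K_def by (intro compact_Int_closed compact_Icc closed_INT) auto
  moreover have "K n \<noteq> {}" for n
  proof -
    have "r (Suc k) + \<bar>g (y k) - y (Suc k)\<bar> \<le> 2 * r k" for k using jumps[of k] r(2)[of k] by simp
    then obtain x where "x \<in> unitI" "\<forall>k\<le>n. \<bar>(g^^k) x - y k\<bar> \<le> shadow_bound r k"
      using finite_shadowing[of n y r] y r(1) by blast
    then have "x \<in> K n" unfolding K_def by (auto simp: abs_le_iff)
    then show ?thesis by blast
  qed
  moreover have "K n \<subseteq> K m" if "m \<le> n" for m n using that unfolding K_def by auto
  ultimately have "\<Inter> (range K) \<noteq> {}" by (rule compact_nest)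
  then obtain x where x: "\<And>n. x \<in> K n" by blast
  have "\<bar>(g^^k) x - y k\<bar> \<le> shadow_bound r k" for k
    using x[of k] unfolding K_def by (auto simp: abs_le_iff dest!: bspec[where x=k])
  then show ?thesis using x[of 0] unfolding K_def by blast
qed

lemma pseudo_orbit_shadowing:
  assumes r: "0 < r" "r \<le> tol" and y: "pseudo_orbit g r y"
  shows "\<exists>x\<in>unitI. \<forall>k. \<bar>(g^^k) x - y k\<bar> \<le> 5 * r"
proof -
  have "\<And>k. y k \<in> unitI" "\<And>k. \<bar>g (y k) - y (Suc k)\<bar> \<le> r"
    using y unfolding pseudo_orbit_def by (auto intro: less_imp_le)
  then obtain x where x: "x \<in> unitI" "\<forall>k. \<bar>(g^^k) x - y k\<bar> \<le> shadow_bound (\<lambda>_. r) k"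
    using infinite_shadowing[of y "\<lambda>_. r"] r by auto
  have "shadow_bound (\<lambda>_. r) k \<le> 5 * r" for k by (rule shadow_bound_le) (use r in auto)
  then show ?thesis using x by (meson order_trans)
qed

lemma asymptotic_pseudo_orbit_shadowing:
  assumes r: "0 < r" "r \<le> tol" and y: "pseudo_orbit g r y" "asymptotic_pseudo_orbit g y"
  shows "\<exists>x\<in>unitI. (\<forall>k. \<bar>(g^^k) x - y k\<bar> \<le> 5 * r) \<and> (\<lambda>n. \<bar>y n - (g^^n) x\<bar>) \<longlonglongrightarrow> 0"
proof -
  have y_in: "\<And>k. y k \<in> unitI" and "\<And>k. \<bar>g (y k) - y (Suc k)\<bar> \<le> r"
    using y(1) unfolding pseudo_orbit_def by (auto intro: less_imp_le)
  then obtain \<sigma> where \<sigma>: "\<And>k. \<bar>g (y k) - y (Suc k)\<bar> \<le> \<sigma> k" "\<And>k. 0 < \<sigma> k \<and> \<sigma> k \<le> r"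
      "\<And>k. \<sigma> (Suc k) \<le> \<sigma> k" "\<sigma> \<longlonglongrightarrow> 0"
    using decreasing_null_majorant[of "\<lambda>k. \<bar>g (y k) - y (Suc k)\<bar>" r] y(2) r(1)
    unfolding asymptotic_pseudo_orbit_def by auto
  have "\<And>k. 0 < \<sigma> k \<and> \<sigma> k \<le> tol" using \<sigma>(2) r(2) by (meson order_trans)
  then obtain x where x: "x \<in> unitI" "\<forall>k. \<bar>(g^^k) x - y k\<bar> \<le> shadow_bound \<sigma> k"
    using infinite_shadowing[of y \<sigma>] y_in \<sigma>(1,3) by blast
  have "shadow_bound \<sigma> k \<le> 5 * r" for k by (rule shadow_bound_le) (use \<sigma>(2) in \<open>auto intro: less_imp_le\<close>)
  then have "\<forall>k. \<bar>(g^^k) x - y k\<bar> \<le> 5 * r" using x(2) by (meson order_trans)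
  moreover have "(\<lambda>k. \<bar>y (Suc k) - (g ^^ Suc k) x\<bar>) \<longlonglongrightarrow> 0"
  proof (rule Lim_null_comparison)
    have "\<bar>y (Suc k) - (g ^^ Suc k) x\<bar> \<le> 5 * \<sigma> k" for k
      using x(2)[rule_format, of "Suc k"] \<sigma>(3)[of k] by auto
    then show "\<forall>\<^sub>F k in sequentially. norm \<bar>y (Suc k) - (g ^^ Suc k) x\<bar> \<le> 5 * \<sigma> k" by simp
    show "(\<lambda>k. 5 * \<sigma> k) \<longlonglongrightarrow> 0" using tendsto_mult_right_zero[OF \<sigma>(4)] by simp
  qed
  then have "(\<lambda>n. \<bar>y n - (g ^^ n) x\<bar>) \<longlonglongrightarrow> 0" by (rule LIMSEQ_imp_Suc)
  ultimately show ?thesis using x(1) by blast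
qed

theorem has_s_limit_shadowing: "s_limit_shadowing g"
  unfolding s_limit_shadowing_def
proof (intro allI impI)
  fix \<epsilon> :: real assume "\<epsilon> > 0"
  define r where "r = min tol (\<epsilon> / 6)"
  have r: "0 < r" "r \<le> tol" "5 * r < \<epsilon>" using tol_bounds \<open>\<epsilon> > 0\<close> unfolding r_def by auto
  have traces: "traces g \<epsilon> x y" if "\<forall>k. \<bar>(g^^k) x - y k\<bar> \<le> 5 * r" for x y
    using that r(3) unfolding traces_def by (meson le_less_trans)
  have "\<exists>x\<in>unitI. traces g \<epsilon> x y" if "pseudo_orbit g r y" for y
    using pseudo_orbit_shadowing[OF r(1,2) that] traces by blast
  moreover have "\<exists>x\<in>unitI. traces g \<epsilon> x y \<and> (\<lambda>n. \<bar>y n - (g ^^ n) x\<bar>) \<longlonglongrightarrow> 0"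
    if "pseudo_orbit g r y" "asymptotic_pseudo_orbit g y" for y
    using asymptotic_pseudo_orbit_shadowing[OF r(1,2) that] traces by blast
  ultimately show "\<exists>\<delta>>0. (\<forall>y. pseudo_orbit g \<delta> y \<longrightarrow> (\<exists>x\<in>unitI. traces g \<epsilon> x y)) \<and>
        (\<forall>y. pseudo_orbit g \<delta> y \<and> asymptotic_pseudo_orbit g y \<longrightarrow>
           (\<exists>x\<in>unitI. traces g \<epsilon> x y \<and> (\<lambda>n. \<bar>y n - (g ^^ n) x\<bar>) \<longlonglongrightarrow> 0))"
    using r(1) by blast
qed

end

section \<open>Measure preservation from the distribution function\<close>

lemma preimage_Icc_borel:
  fixes g :: "real \<Rightarrow> real"
  assumes "continuous_on {s..t} g" "X \<in> sets borel"
  shows "{x\<in>{s..t}. g x \<in> X} \<in> sets borel"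
proof -
  have "(\<lambda>x. if x \<in> {s..t} then g x else 0) \<in> borel_measurable borel"
    using assms(1) by (intro borel_measurable_continuous_on_if) auto
  from measurable_sets[OF this assms(2)]
  have "{s..t} \<inter> (\<lambda>x. if x \<in> {s..t} then g x else 0) -` X \<in> sets borel" by auto
  also have "{s..t} \<inter> (\<lambda>x. if x \<in> {s..t} then g x else 0) -` X = {x\<in>{s..t}. g x \<in> X}" by auto
  finally show ?thesis .
qed

lemma measure_preimage_atMost_if_cdf:
  fixes g :: "real \<Rightarrow> real"
  assumes cont: "continuous_on unitI g" and maps: "g ` unitI \<subseteq> unitI"
    and cdf: "\<And>a. a \<in> unitI \<Longrightarrow> measure lebesgue {x\<in>unitI. g x \<le> a} = a"
  shows "measure lborel {x\<in>unitI. g x \<le> a} = measure lborel (unitI \<inter> {..a})"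
proof (cases "a \<in> unitI")
  case True
  have "measure lborel {x\<in>unitI. g x \<le> a} = a"
    using cdf[OF True] preimage_Icc_borel[OF cont, of "{..a}"] by (simp add: measure_completion)
  moreover have "unitI \<inter> {..a} = {0..a}" using True by auto
  ultimately show ?thesis using True by simp
next
  case False
  then have "{x\<in>unitI. g x \<le> a} = unitI \<inter> {..a}" using maps by (force simp: not_le)
  then show ?thesis by simp
qed

text \<open>The image of Lebesgue measure on \<open>I\<close> under \<open>g\<close> and Lebesgue measure on \<open>I\<close> are real
  distributions with the same distribution function, so they agree on all Borel sets.\<close>

lemma emeasure_preimage_eq_if_cdf:
  fixes g :: "real \<Rightarrow> real"
  assumes cont: "continuous_on unitI g" and maps: "g ` unitI \<subseteq> unitI"
    and cdf: "\<And>a. a \<in> unitI \<Longrightarrow> measure lebesgue {x\<in>unitI. g x \<le> a} = a"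
    and X: "X \<in> sets borel"
  shows "emeasure lborel {x\<in>unitI. g x \<in> X} = emeasure lborel (unitI \<inter> X)"
proof -
  define g' where "g' x = (if x \<in> unitI then g x else 0)" for x :: real
  have g'[measurable]: "g' \<in> borel_measurable borel"
    unfolding g'_def using cont by (intro borel_measurable_continuous_on_if) auto
  define P where "P = density lborel (indicator unitI)"
  define Q where "Q = distr P borel g'"
  have sets_P: "sets P = sets borel" and space_P: "space P = UNIV" unfolding P_def by simp_all
  have P: "emeasure P Y = emeasure lborel (unitI \<inter> Y)" if "Y \<in> sets borel" for Y
    unfolding P_def using that by (subst emeasure_restricted) auto
  have Q: "emeasure Q Y = emeasure lborel {x\<in>unitI. g x \<in> Y}" if "Y \<in> sets borel" for Y
  proof -
    have "emeasure Q Y = emeasure P (g' -` Y)"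
      unfolding Q_def using that by (subst emeasure_distr) (auto simp: sets_P space_P cong: measurable_cong_sets)
    also have "\<dots> = emeasure lborel (unitI \<inter> g' -` Y)" using that measurable_sets[OF g' that] by (simp add: P)
    also have "unitI \<inter> g' -` Y = {x\<in>unitI. g x \<in> Y}" unfolding g'_def by auto
    finally show ?thesis .
  qed
  have "prob_space P" by (rule prob_spaceI) (simp add: space_P P)
  then have "prob_space Q"
    unfolding Q_def by (rule prob_space.prob_space_distr) (simp add: sets_P cong: measurable_cong_sets)
  have "real_distribution P" "real_distribution Q"
    using \<open>prob_space P\<close> \<open>prob_space Q\<close> sets_P unfolding Q_def real_distribution_def real_distribution_axioms_def
    by auto
  moreover have "cdf Q a = cdf P a" for a
    unfolding cdf_def measure_def using P[of "{..a}"] Q[of "{..a}"]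
      measure_preimage_atMost_if_cdf[OF cont maps cdf, of a] by (simp add: measure_def)
  ultimately have "Q = P" by (intro cdf_unique ext)
  then show ?thesis using P[OF X] Q[OF X] by simp
qed

lemma lambda_preserving_if_cdf:
  fixes g :: "real \<Rightarrow> real"
  assumes cont: "continuous_on unitI g" and maps: "g ` unitI \<subseteq> unitI"
    and cdf: "\<And>a. a \<in> unitI \<Longrightarrow> measure lebesgue {x\<in>unitI. g x \<le> a} = a"
  shows "lambda_preserving g"
  unfolding lambda_preserving_def
proof (intro allI impI)
  fix A :: "real set" assume A: "A \<in> sets lebesgue \<and> A \<subseteq> unitI"
  then obtain S Z Z' where SZ: "A = S \<union> Z" "Z \<subseteq> Z'" "Z' \<in> null_sets lborel" "S \<in> sets borel"
    by (auto elim: sets_completionE)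
  have key: "emeasure lborel {x\<in>unitI. g x \<in> X} = emeasure lborel (unitI \<inter> X)"
    if "X \<in> sets borel" for X
    by (rule emeasure_preimage_eq_if_cdf[OF cont maps _ that]) (rule cdf)
  have Z'_borel: "Z' \<in> sets borel" using SZ by (simp add: null_sets_def)
  have "emeasure lborel {x\<in>unitI. g x \<in> Z'} \<le> emeasure lborel Z'"
    unfolding key[OF Z'_borel] by (rule emeasure_mono) (use Z'_borel in auto)
  then have "{x\<in>unitI. g x \<in> Z'} \<in> null_sets lborel"
    using SZ preimage_Icc_borel[OF cont Z'_borel] by (auto simp: null_sets_def)
  then have null: "{x\<in>unitI. g x \<in> Z} \<in> null_sets lebesgue"
    using SZ by (intro null_sets_completion_subset[OF _ null_sets_completionI]) auto
  have S: "{x\<in>unitI. g x \<in> S} \<in> sets lebesgue"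
    using preimage_Icc_borel[OF cont SZ(4)] by (auto intro: sets_completionI_sets)
  have pre: "{x\<in>unitI. g x \<in> A} = {x\<in>unitI. g x \<in> S} \<union> {x\<in>unitI. g x \<in> Z}" using SZ by auto
  have "measure lebesgue {x\<in>unitI. g x \<in> A} = measure lebesgue {x\<in>unitI. g x \<in> S}"
    unfolding pre by (rule measure_Un_null_set[OF S null])
  also have "\<dots> = measure lborel (unitI \<inter> S)"
    using preimage_Icc_borel[OF cont SZ(4)] key[OF SZ(4)] by (simp add: measure_def)
  also have "\<dots> = measure lebesgue A"
  proof -
    have "Z \<in> null_sets lebesgue"
      using SZ by (intro null_sets_completion_subset[OF _ null_sets_completionI]) auto
    then have "measure lebesgue A = measure lebesgue S"
      unfolding SZ(1) by (intro measure_Un_null_set) (use SZ in \<open>auto intro: sets_completionI_sets\<close>)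
    moreover have "unitI \<inter> S = S" using SZ A by auto
    ultimately show ?thesis using SZ(4) by simp
  qed
  finally show "{x\<in>unitI. g x \<in> A} \<in> sets lebesgue \<and>
      measure lebesgue {x\<in>unitI. g x \<in> A} = measure lebesgue A"
    using S null pre by auto
qed

section \<open>Step distributions and their quantile functions\<close>

definition ramp :: "real \<Rightarrow> real" where "ramp x = max 0 (min 1 x)"

lemma continuous_on_ramp: "continuous_on S ramp" unfolding ramp_def by (intro continuous_intros)
lemma ramp_mono: "x \<le> y \<Longrightarrow> ramp x \<le> ramp y" unfolding ramp_def by auto

lemma sum_ramp_shifts:
  assumes "A \<le> B"
  shows "(\<Sum>k\<in>{A..<B}. ramp (x - real k)) = max 0 (min (real B - real A) (x - real A))"
  using assms
proof (induction B)
  case (Suc B)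
  show ?case
  proof (cases "A = Suc B")
    case False
    then have "A \<le> B" using Suc.prems by simp
    then show ?thesis using Suc.IH unfolding ramp_def by (auto simp: max_def min_def)
  qed simp
qed simp

text \<open>\<open>step_cdf N c A B\<close> is the distribution function of the measure that spreads mass \<open>c k\<close>
  uniformly over \<open>[k/N, (k+1)/N]\<close> for \<open>A \<le> k < B\<close>; \<open>step_quantile\<close> inverts it.\<close>

definition step_cdf :: "nat \<Rightarrow> (nat \<Rightarrow> real) \<Rightarrow> nat \<Rightarrow> nat \<Rightarrow> real \<Rightarrow> real" where
  "step_cdf N c A B v = (\<Sum>k\<in>{A..<B}. c k * ramp (real N * v - real k))"

definition step_mass :: "(nat \<Rightarrow> real) \<Rightarrow> nat \<Rightarrow> nat \<Rightarrow> real" where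
  "step_mass c A B = (\<Sum>k\<in>{A..<B}. c k)"

definition step_quantile :: "nat \<Rightarrow> (nat \<Rightarrow> real) \<Rightarrow> nat \<Rightarrow> nat \<Rightarrow> real \<Rightarrow> real" where
  "step_quantile N c A B \<tau> = (THE v. v \<in> {real A / real N .. real B / real N} \<and> step_cdf N c A B v = \<tau>)"

lemma compact_sublevel_Icc:
  fixes G :: "real \<Rightarrow> real"
  assumes "continuous_on {p..q} G" shows "compact {x\<in>{p..q}. G x \<le> a}"
proof -
  have "closed ({p..q} \<inter> G -` {..a})" using assms by (intro continuous_closed_preimage) auto
  then have "compact ({p..q} \<inter> ({p..q} \<inter> G -` {..a}))" by (intro compact_Int_closed) auto
  moreover have "{p..q} \<inter> ({p..q} \<inter> G -` {..a}) = {x\<in>{p..q}. G x \<le> a}" by auto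
  ultimately show ?thesis by simp
qed

lemma measure_sublevel_split:
  fixes G :: "real \<Rightarrow> real"
  assumes pq: "p \<le> q" "q \<le> r" and cont: "continuous_on {p..r} G"
  shows "measure lebesgue {x\<in>{p..r}. G x \<le> a} =
         measure lebesgue {x\<in>{p..q}. G x \<le> a} + measure lebesgue {x\<in>{q..r}. G x \<le> a}"
proof -
  have "continuous_on {p..q} G" "continuous_on {q..r} G" using cont pq by (auto intro: continuous_on_subset)
  then have m: "{x\<in>{p..q}. G x \<le> a} \<in> lmeasurable" "{x\<in>{q..r}. G x \<le> a} \<in> lmeasurable"
    by (blast intro: lmeasurable_compact compact_sublevel_Icc)+
  have "measure lebesgue ({x\<in>{p..q}. G x \<le> a} \<inter> {x\<in>{q..r}. G x \<le> a}) \<le> measure lebesgue {q}"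
    by (rule measure_mono_fmeasurable) (use m lmeasurable_compact[OF compact_sing] in auto)
  then have "measure lebesgue ({x\<in>{p..q}. G x \<le> a} \<inter> {x\<in>{q..r}. G x \<le> a}) = 0"
    by (simp add: measure_nonneg antisym)
  moreover have "{x\<in>{p..r}. G x \<le> a} = {x\<in>{p..q}. G x \<le> a} \<union> {x\<in>{q..r}. G x \<le> a}" using pq by auto
  ultimately show ?thesis using measure_Un3[OF m] by simp
qed

locale step_measure =
  fixes N :: nat and c :: "nat \<Rightarrow> real" and A B :: nat
  assumes N: "N > 0" and AB: "A \<le> B"
    and c_pos: "\<And>k. A \<le> k \<Longrightarrow> k < B \<Longrightarrow> 0 < c k"
    and c_le: "\<And>k. A \<le> k \<Longrightarrow> k < B \<Longrightarrow> c k \<le> 1 / (2 * real N)"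
begin

abbreviation "F \<equiv> step_cdf N c A B"
abbreviation "Q \<equiv> step_quantile N c A B"
abbreviation "lo \<equiv> real A / real N"
abbreviation "hi \<equiv> real B / real N"
abbreviation "mass \<equiv> step_mass c A B"

lemma lo_le_hi: "lo \<le> hi" using AB by (simp add: divide_right_mono)

lemma mass_nonneg: "0 \<le> mass" unfolding step_mass_def using c_pos by (intro sum_nonneg) (auto intro: less_imp_le)

lemma cdf_mono: "u \<le> v \<Longrightarrow> F u \<le> F v"
  unfolding step_cdf_def using c_pos N by (intro sum_mono mult_left_mono ramp_mono) (auto intro: less_imp_le)

text \<open>The densities are at most \<open>N/(2N) = 1/2\<close>, so the quantile function expands by 2.\<close>

lemma cdf_increment_le: assumes "u \<le> v" shows "F v - F u \<le> (v - u) / 2"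
proof -
  define \<Delta> where "\<Delta> k = ramp (real N * v - real k) - ramp (real N * u - real k)" for k
  have \<Delta>: "0 \<le> \<Delta> k" for k unfolding \<Delta>_def using assms N by (auto intro!: ramp_mono mult_left_mono)
  have "F v - F u = (\<Sum>k\<in>{A..<B}. c k * \<Delta> k)"
    unfolding step_cdf_def \<Delta>_def by (simp add: sum_subtractf right_diff_distrib)
  also have "\<dots> \<le> (\<Sum>k\<in>{A..<B}. \<Delta> k / (2 * real N))"
  proof (rule sum_mono)
    fix k assume "k \<in> {A..<B}"
    then have "c k * \<Delta> k \<le> 1 / (2 * real N) * \<Delta> k" using c_le \<Delta> by (intro mult_right_mono) auto
    then show "c k * \<Delta> k \<le> \<Delta> k / (2 * real N)" by simp
  qed
  also have "\<dots> = (max 0 (min (real B - real A) (real N * v - real A))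
      - max 0 (min (real B - real A) (real N * u - real A))) / (2 * real N)"
    unfolding \<Delta>_def by (simp add: sum_divide_distrib[symmetric] sum_subtractf sum_ramp_shifts[OF AB])
  also have "\<dots> \<le> (real N * v - real N * u) / (2 * real N)"
  proof -
    define U V where "U = real N * u" and "V = real N * v"
    have "U \<le> V" unfolding U_def V_def using assms by (simp add: mult_left_mono)
    then have "max 0 (min (real B - real A) (V - real A)) - max 0 (min (real B - real A) (U - real A)) \<le> V - U"
      by (simp add: max_def min_def)
    then show ?thesis unfolding U_def V_def by (intro divide_right_mono) auto
  qed
  also have "\<dots> = (v - u) / 2" using N by (simp add: field_simps)
  finally show ?thesis .
qed

lemma cdf_below: assumes "v \<le> lo" shows "F v = 0"
proof -
  have "real N * v \<le> real A" using assms N by (simp add: field_simps)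
  then have "ramp (real N * v - real k) = 0" if "A \<le> k" for k using that unfolding ramp_def by auto
  then show ?thesis unfolding step_cdf_def by simp
qed

lemma cdf_above: assumes "hi \<le> v" shows "F v = mass"
proof -
  have "real B \<le> real N * v" using assms N by (simp add: field_simps)
  then have "ramp (real N * v - real k) = 1" if "k < B" for k using that unfolding ramp_def by auto
  then show ?thesis unfolding step_cdf_def step_mass_def by simp
qed

lemma continuous_on_cdf: "continuous_on S F"
  unfolding step_cdf_def by (intro continuous_intros continuous_on_compose2[OF continuous_on_ramp[of UNIV]]) auto

lemma cdf_strict_mono:
  assumes "lo \<le> u" "u < v" "v \<le> hi"
  shows "F u < F v"
proof -
  text \<open>The level \<open>k0\<close> whose ramp contains \<open>N u\<close> strictly increases between \<open>u\<close> and \<open>v\<close>.\<close>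
  define k0 where "k0 = nat \<lfloor>real N * u\<rfloor>"
  have Nu: "real A \<le> real N * u" "real N * u < real N * v" "real N * v \<le> real B"
    using assms N by (auto simp: field_simps)
  then have "0 \<le> real N * u" using of_nat_0_le_iff order_trans by blast
  then have k0: "real k0 \<le> real N * u" "real N * u < real k0 + 1" unfolding k0_def by linarith+
  then have "A \<le> k0" "k0 < B" using Nu by linarith+
  moreover have "ramp (real N * u - real k0) < ramp (real N * v - real k0)"
    using k0 Nu unfolding ramp_def by (auto simp: max_def min_def)
  ultimately show ?thesis unfolding step_cdf_def
    using c_pos Nu by (intro sum_strict_mono_ex1) (auto intro!: mult_left_mono ramp_mono bexI[of _ k0])
qed

lemma cdf_lo: "F lo = 0" by (rule cdf_below) simp
lemma cdf_hi: "F hi = mass" by (rule cdf_above) simp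

lemma cdf_in_range: "v \<in> {lo..hi} \<Longrightarrow> F v \<in> {0..mass}"
  using cdf_mono[of lo v] cdf_mono[of v hi] by (auto simp: cdf_lo cdf_hi)

lemma cdf_inverse_unique:
  assumes "\<tau> \<in> {0..mass}"
  shows "\<exists>!v. v \<in> {lo..hi} \<and> F v = \<tau>"
proof -
  have "\<exists>v\<ge>lo. v \<le> hi \<and> F v = \<tau>"
    using assms lo_le_hi by (intro IVT') (auto simp: cdf_lo cdf_hi continuous_on_cdf)
  moreover have "v = v'" if "v \<in> {lo..hi}" "F v = \<tau>" "v' \<in> {lo..hi}" "F v' = \<tau>" for v v'
    using cdf_strict_mono[of v v'] cdf_strict_mono[of v' v] that by (cases v v' rule: linorder_cases) auto
  ultimately show ?thesis by (metis atLeastAtMost_iff)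
qed

lemma quantile_spec:
  assumes "\<tau> \<in> {0..mass}"
  shows "Q \<tau> \<in> {lo..hi}" "F (Q \<tau>) = \<tau>"
  using theI'[OF cdf_inverse_unique[OF assms]] unfolding step_quantile_def by auto

lemma quantile_cdf: assumes "v \<in> {lo..hi}" shows "Q (F v) = v"
  using cdf_inverse_unique[OF cdf_in_range[OF assms]] quantile_spec[OF cdf_in_range[OF assms]] assms by blast

lemma quantile_0: "Q 0 = lo" using quantile_cdf[of lo] lo_le_hi by (simp add: cdf_lo)
lemma quantile_mass: "Q mass = hi" using quantile_cdf[of hi] lo_le_hi by (simp add: cdf_hi)

lemma quantile_le_iff:
  assumes "\<tau> \<in> {0..mass}" "a \<in> {lo..hi}"
  shows "Q \<tau> \<le> a \<longleftrightarrow> \<tau> \<le> F a"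
  using cdf_mono[of "Q \<tau>" a] cdf_strict_mono[of a "Q \<tau>"] quantile_spec[OF assms(1)] assms(2)
  by (cases "Q \<tau> \<le> a") auto

lemma quantile_expanding:
  assumes "\<tau> \<in> {0..mass}" "\<sigma> \<in> {0..mass}" "\<tau> \<le> \<sigma>"
  shows "Q \<tau> \<le> Q \<sigma>" "2 * (\<sigma> - \<tau>) \<le> Q \<sigma> - Q \<tau>"
proof -
  show le: "Q \<tau> \<le> Q \<sigma>" using quantile_le_iff[OF assms(1) quantile_spec(1)[OF assms(2)]]
    quantile_spec(2)[OF assms(2)] assms(3) by simp
  show "2 * (\<sigma> - \<tau>) \<le> Q \<sigma> - Q \<tau>"
    using cdf_increment_le[OF le] quantile_spec[OF assms(1)] quantile_spec[OF assms(2)] by auto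
qed

lemma continuous_on_quantile: "continuous_on {0..mass} Q"
proof -
  have "F ` {lo..hi} = {0..mass}"
  proof
    show "{0..mass} \<subseteq> F ` {lo..hi}" using quantile_spec by (metis image_eqI subsetI)
  qed (use cdf_in_range in auto)
  moreover have "continuous_on (F ` {lo..hi}) Q"
    by (rule continuous_on_inv) (auto simp: continuous_on_cdf quantile_cdf)
  ultimately show ?thesis by simp
qed

lemma measure_sublevel_outside_range:
  assumes range: "\<And>x. x \<in> {p..p+mass} \<Longrightarrow> G x \<in> {lo..hi}" and a: "a \<notin> {lo..hi}"
  shows "measure lebesgue {x\<in>{p..p+mass}. G x \<le> a} = F a"
proof (cases "a < lo")
  case True
  then have "\<not> G x \<le> a" if "x \<in> {p..p+mass}" for x using range[OF that] by auto
  then have E: "{x\<in>{p..p+mass}. G x \<le> a} = {}" by blast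
  show ?thesis unfolding E using cdf_below[of a] True by simp
next
  case False
  then have "hi < a" using a by auto
  then have "G x \<le> a" if "x \<in> {p..p+mass}" for x using range[OF that] by auto
  then have E: "{x\<in>{p..p+mass}. G x \<le> a} = {p..p+mass}" by blast
  show ?thesis unfolding E using cdf_above[of a] \<open>hi < a\<close> mass_nonneg by simp
qed

lemma increasing_leg:
  assumes G: "\<And>x. x \<in> {p..p+mass} \<Longrightarrow> G x = Q (x - p)"
  shows "continuous_on {p..p+mass} G" "expanding_on p (p+mass) G" "G p = lo" "G (p+mass) = hi"
    "\<And>x. x \<in> {p..p+mass} \<Longrightarrow> G x \<in> {lo..hi}"
    "measure lebesgue {x\<in>{p..p+mass}. G x \<le> a} = F a"
proof -
  have "continuous_on {p..p+mass} (\<lambda>x. Q (x - p))"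
    by (intro continuous_on_compose2[OF continuous_on_quantile]) (auto intro!: continuous_intros)
  then show "continuous_on {p..p+mass} G" by (rule continuous_on_eq) (use G in auto)
  have "G s \<le> G t \<and> 2 * (t - s) \<le> G t - G s" if "p \<le> s" "s \<le> t" "t \<le> p+mass" for s t
    using quantile_expanding[of "s - p" "t - p"] G[of s] G[of t] that by auto
  then show "expanding_on p (p+mass) G" unfolding expanding_on_def by blast
  show "G p = lo" "G (p+mass) = hi" using G mass_nonneg quantile_0 quantile_mass by auto
  show range: "G x \<in> {lo..hi}" if "x \<in> {p..p+mass}" for x using G[OF that] quantile_spec that by auto
  show "measure lebesgue {x\<in>{p..p+mass}. G x \<le> a} = F a"
  proof (cases "a \<in> {lo..hi}")
    case True
    have "G x \<le> a \<longleftrightarrow> x \<le> p + F a" if "x \<in> {p..p+mass}" for x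
      using G[OF that] quantile_le_iff[of "x - p" a] that True by auto
    then have E: "{x\<in>{p..p+mass}. G x \<le> a} = {p..p + F a}" using cdf_in_range[OF True] by auto
    show ?thesis unfolding E using cdf_in_range[OF True] by simp
  qed (rule measure_sublevel_outside_range[OF range])
qed

lemma decreasing_leg:
  assumes G: "\<And>x. x \<in> {p..p+mass} \<Longrightarrow> G x = Q (p + mass - x)"
  shows "continuous_on {p..p+mass} G" "expanding_on p (p+mass) G" "G p = hi" "G (p+mass) = lo"
    "\<And>x. x \<in> {p..p+mass} \<Longrightarrow> G x \<in> {lo..hi}"
    "measure lebesgue {x\<in>{p..p+mass}. G x \<le> a} = F a"
proof -
  have "continuous_on {p..p+mass} (\<lambda>x. Q (p + mass - x))"
    by (intro continuous_on_compose2[OF continuous_on_quantile]) (auto intro!: continuous_intros)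
  then show "continuous_on {p..p+mass} G" by (rule continuous_on_eq) (use G in auto)
  have "G t \<le> G s \<and> 2 * (t - s) \<le> G s - G t" if "p \<le> s" "s \<le> t" "t \<le> p+mass" for s t
    using quantile_expanding[of "p + mass - t" "p + mass - s"] G[of s] G[of t] that by auto
  then show "expanding_on p (p+mass) G" unfolding expanding_on_def by blast
  show "G p = hi" "G (p+mass) = lo" using G mass_nonneg quantile_0 quantile_mass by auto
  show range: "G x \<in> {lo..hi}" if "x \<in> {p..p+mass}" for x using G[OF that] quantile_spec that by auto
  show "measure lebesgue {x\<in>{p..p+mass}. G x \<le> a} = F a"
  proof (cases "a \<in> {lo..hi}")
    case True
    have "G x \<le> a \<longleftrightarrow> p + mass - F a \<le> x" if "x \<in> {p..p+mass}" for x
      using G[OF that] quantile_le_iff[of "p + mass - x" a] that True by auto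
    then have E: "{x\<in>{p..p+mass}. G x \<le> a} = {p + mass - F a..p + mass}"
      using cdf_in_range[OF True] by auto
    show ?thesis unfolding E using cdf_in_range[OF True] by simp
  qed (rule measure_sublevel_outside_range[OF range])
qed

end

section \<open>Zigzags\<close>

lemma continuous_on_reflect:
  fixes G G' :: "real \<Rightarrow> real"
  assumes "continuous_on {p..q} G" "\<And>x. x \<in> {p..q} \<Longrightarrow> G' x = G (p + q - x)"
  shows "continuous_on {p..q} G'"
proof -
  have "continuous_on {p..q} (\<lambda>x. p + q - x)" by (rule continuous_on_op_minus)
  then have "continuous_on {p..q} (\<lambda>x. G (p + q - x))"
    by (rule continuous_on_compose2[OF assms(1)]) auto
  then show ?thesis by (rule continuous_on_eq) (use assms(2) in auto)
qed

lemma expanding_on_reflect: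
  fixes G G' :: "real \<Rightarrow> real"
  assumes exp: "expanding_on a b G" and G': "\<And>x. x \<in> {c - b..c - a} \<Longrightarrow> G' x = G (c - x)"
  shows "expanding_on (c - b) (c - a) G'"
proof -
  have st: "a \<le> c - t" "c - t \<le> c - s" "c - s \<le> b" "G' s = G (c - s)" "G' t = G (c - t)"
    if "c - b \<le> s" "s \<le> t" "t \<le> c - a" for s t
    using that G' by auto
  from exp consider
      "\<And>s t. a \<le> s \<Longrightarrow> s \<le> t \<Longrightarrow> t \<le> b \<Longrightarrow> G s \<le> G t \<and> 2 * (t - s) \<le> G t - G s"
    | "\<And>s t. a \<le> s \<Longrightarrow> s \<le> t \<Longrightarrow> t \<le> b \<Longrightarrow> G t \<le> G s \<and> 2 * (t - s) \<le> G s - G t"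
    unfolding expanding_on_def by blast
  then show ?thesis
  proof cases
    case 1
    have "G' t \<le> G' s \<and> 2 * (t - s) \<le> G' s - G' t" if "c - b \<le> s" "s \<le> t" "t \<le> c - a" for s t
      using 1[OF st(1-3)[OF that]] st(4,5)[OF that] by simp
    then show ?thesis unfolding expanding_on_def by blast
  next
    case 2
    have "G' s \<le> G' t \<and> 2 * (t - s) \<le> G' t - G' s" if "c - b \<le> s" "s \<le> t" "t \<le> c - a" for s t
      using 2[OF st(1-3)[OF that]] st(4,5)[OF that] by simp
    then show ?thesis unfolding expanding_on_def by blast
  qed
qed

lemma covered_by_laps_reflect:
  fixes G G' :: "real \<Rightarrow> real"
  assumes laps: "covered_by_laps G N p q \<gamma>" and G': "\<And>x. x \<in> {p..q} \<Longrightarrow> G' x = G (p + q - x)"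
  shows "covered_by_laps G' N p q \<gamma>"
  unfolding covered_by_laps_def
proof
  fix y assume "y \<in> {p..q}"
  then have "p + q - y \<in> {p..q}" by auto
  then obtain a b where ab: "p \<le> a" "a \<le> p + q - y" "p + q - y \<le> b" "b \<le> q" "\<gamma> \<le> b - a"
    and lap: "expanding_lap G N a b"
    using laps unfolding covered_by_laps_def by blast
  have G'_ab: "\<And>x. x \<in> {p + q - b..p + q - a} \<Longrightarrow> G' x = G (p + q - x)" using G' ab by auto
  have "continuous_on {p + q - b..p + q - a} G'"
  proof -
    have "continuous_on {p + q - b..p + q - a} (\<lambda>x. p + q - x)" by (rule continuous_on_op_minus)
    then have "continuous_on {p + q - b..p + q - a} (\<lambda>x. G (p + q - x))"
      using lap ab unfolding expanding_lap_def by (elim conjE continuous_on_compose2) auto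
    then show ?thesis by (rule continuous_on_eq) (use G'_ab in auto)
  qed
  moreover have "G' (p + q - b) = G b" "G' (p + q - a) = G a" using G'_ab ab by auto
  moreover have "expanding_on (p + q - b) (p + q - a) G'"
    using lap G'_ab unfolding expanding_lap_def by (intro expanding_on_reflect) auto
  ultimately have "expanding_lap G' N (p + q - b) (p + q - a)"
    using lap unfolding expanding_lap_def by simp
  then show "\<exists>a b. p \<le> a \<and> a \<le> y \<and> y \<le> b \<and> b \<le> q \<and> \<gamma> \<le> b - a \<and> expanding_lap G' N a b"
    using ab by (intro exI[of _ "p + q - b"] exI[of _ "p + q - a"]) auto
qed

lemma measure_sublevel_reflect:
  fixes G G' :: "real \<Rightarrow> real"
  assumes G': "\<And>x. x \<in> {p..q} \<Longrightarrow> G' x = G (p + q - x)"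
  shows "measure lebesgue {x\<in>{p..q}. G' x \<le> a} = measure lebesgue {x\<in>{p..q}. G x \<le> a}"
proof -
  let ?S = "{x\<in>{p..q}. G x \<le> a}"
  have "(\<lambda>x. (-1) *\<^sub>R x + (p + q)) ` ?S = {x\<in>{p..q}. G' x \<le> a}"
  proof
    show "(\<lambda>x. (-1) *\<^sub>R x + (p + q)) ` ?S \<subseteq> {x\<in>{p..q}. G' x \<le> a}" using G' by auto
    show "{x\<in>{p..q}. G' x \<le> a} \<subseteq> (\<lambda>x. (-1) *\<^sub>R x + (p + q)) ` ?S"
    proof
      fix x assume "x \<in> {x\<in>{p..q}. G' x \<le> a}"
      then have "p + q - x \<in> ?S" "x = (-1) *\<^sub>R (p + q - x) + (p + q)" using G' by auto
      then show "x \<in> (\<lambda>x. (-1) *\<^sub>R x + (p + q)) ` ?S" by blast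
    qed
  qed
  then show ?thesis using measure_lebesgue_affine[of "-1" "p + q" ?S] by simp
qed

lemma covered_by_three_laps:
  fixes G :: "real \<Rightarrow> real"
  assumes q: "q0 \<le> q1" "q1 \<le> q2" "q2 \<le> q3"
    and laps: "expanding_lap G N q0 q1" "expanding_lap G N q1 q2" "expanding_lap G N q2 q3"
    and len: "q0 = q1 \<or> \<gamma> \<le> q1 - q0" "\<gamma> \<le> q2 - q1" "q2 = q3 \<or> \<gamma> \<le> q3 - q2"
  shows "covered_by_laps G N q0 q3 \<gamma>" "continuous_on {q0..q3} G"
proof -
  show "covered_by_laps G N q0 q3 \<gamma>" unfolding covered_by_laps_def
  proof
    fix y assume y: "y \<in> {q0..q3}"
    consider "q1 \<le> y \<and> y \<le> q2" | "y < q1" | "q2 < y" by linarith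
    then show "\<exists>a b. q0 \<le> a \<and> a \<le> y \<and> y \<le> b \<and> b \<le> q3 \<and> \<gamma> \<le> b - a \<and> expanding_lap G N a b"
    proof cases
      case 1 then show ?thesis using q laps len by (intro exI[of _ q1] exI[of _ q2]) auto
    next
      case 2 then show ?thesis using y q laps len by (intro exI[of _ q0] exI[of _ q1]) auto
    next
      case 3 then show ?thesis using y q laps len by (intro exI[of _ q2] exI[of _ q3]) auto
    qed
  qed
  have "continuous_on ({q0..q1} \<union> {q1..q2} \<union> {q2..q3}) G"
    using laps unfolding expanding_lap_def by (intro continuous_on_closed_Un) auto
  moreover have "{q0..q1} \<union> {q1..q2} \<union> {q2..q3} = {q0..q3}" using q by auto
  ultimately show "continuous_on {q0..q3} G" by simp
qed

text \<open>The zigzag with level masses \<open>m k\<close> (\<open>lo \<le> k \<le> hi\<close>) starting at level \<open>u\<close> falls from \<open>u/N\<close> to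
  \<open>lo/N\<close>, rises to \<open>(hi+1)/N\<close> and falls back to \<open>lo/N\<close>. Its legs share the mass of each level
  \<open>k < u\<close> as \<open>1/4 + 1/4 + 1/2\<close> and of each level \<open>k \<ge> u\<close> as \<open>0 + 1/2 + 1/2\<close>, so together they push
  Lebesgue measure forward to the step measure with masses \<open>m\<close>.\<close>

definition leg1_weight :: "(nat \<Rightarrow> real) \<Rightarrow> nat \<Rightarrow> real" where
  "leg1_weight m k = m k / 4"

definition leg2_weight :: "(nat \<Rightarrow> real) \<Rightarrow> nat \<Rightarrow> nat \<Rightarrow> real" where
  "leg2_weight m u k = (if k < u then m k / 4 else m k / 2)"

definition leg3_weight :: "(nat \<Rightarrow> real) \<Rightarrow> nat \<Rightarrow> real" where
  "leg3_weight m k = m k / 2"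

definition zigzag :: "nat \<Rightarrow> (nat \<Rightarrow> real) \<Rightarrow> nat \<Rightarrow> nat \<Rightarrow> nat \<Rightarrow> real \<Rightarrow> real" where
  "zigzag N m lo hi u t =
     (let l1 = step_mass (leg1_weight m) lo u; l2 = step_mass (leg2_weight m u) lo (Suc hi);
          l3 = step_mass (leg3_weight m) lo (Suc hi)
      in if t \<le> l1 then step_quantile N (leg1_weight m) lo u (l1 - t)
         else if t \<le> l1 + l2 then step_quantile N (leg2_weight m u) lo (Suc hi) (t - l1)
         else step_quantile N (leg3_weight m) lo (Suc hi) (l1 + l2 + l3 - t))"

locale zigzag_data =
  fixes N :: nat and m :: "nat \<Rightarrow> real" and lo hi u :: nat
  assumes N: "N > 0" and lo_hi: "lo \<le> hi" and lo_u: "lo \<le> u" and u_hi: "u \<le> Suc hi" and hi_N: "Suc hi \<le> N"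
    and m_pos: "\<And>k. lo \<le> k \<Longrightarrow> k \<le> hi \<Longrightarrow> 0 < m k"
    and m_le: "\<And>k. lo \<le> k \<Longrightarrow> k \<le> hi \<Longrightarrow> m k \<le> 1 / (2 * real N)"
begin

sublocale leg1: step_measure N "leg1_weight m" lo u
proof
  fix k assume "lo \<le> k" "k < u"
  then show "0 < leg1_weight m k" "leg1_weight m k \<le> 1 / (2 * real N)"
    using m_pos[of k] m_le[of k] u_hi unfolding leg1_weight_def by auto
qed (use N lo_u in auto)

sublocale leg2: step_measure N "leg2_weight m u" lo "Suc hi"
proof
  fix k assume "lo \<le> k" "k < Suc hi"
  then show "0 < leg2_weight m u k" "leg2_weight m u k \<le> 1 / (2 * real N)"
    using m_pos[of k] m_le[of k] unfolding leg2_weight_def by auto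
qed (use N lo_hi in auto)

sublocale leg3: step_measure N "leg3_weight m" lo "Suc hi"
proof
  fix k assume "lo \<le> k" "k < Suc hi"
  then show "0 < leg3_weight m k" "leg3_weight m k \<le> 1 / (2 * real N)"
    using m_pos[of k] m_le[of k] unfolding leg3_weight_def by auto
qed (use N lo_hi in auto)

abbreviation "len \<equiv> leg1.mass + leg2.mass + leg3.mass"

lemma sum_pos_levels:
  fixes f :: "nat \<Rightarrow> real" assumes "\<And>k. lo \<le> k \<Longrightarrow> k \<le> hi \<Longrightarrow> 0 < f k"
  shows "0 < (\<Sum>k\<in>{lo..<Suc hi}. f k)"
proof -
  have "(\<Sum>k\<in>{lo..<Suc hi}. f k) = f lo + (\<Sum>k\<in>{Suc lo..<Suc hi}. f k)"
    using lo_hi by (subst sum.atLeast_Suc_lessThan) auto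
  moreover have "0 \<le> (\<Sum>k\<in>{Suc lo..<Suc hi}. f k)" using assms by (intro sum_nonneg) (auto intro: less_imp_le)
  ultimately show ?thesis using assms[of lo] lo_hi by linarith
qed

lemma leg2_mass_pos: "0 < leg2.mass"
  unfolding step_mass_def leg2_weight_def by (rule sum_pos_levels) (use m_pos in auto)

lemma leg3_mass_pos: "0 < leg3.mass"
  unfolding step_mass_def leg3_weight_def by (rule sum_pos_levels) (use m_pos in auto)

lemma sum_leg_weights:
  "(\<Sum>k\<in>{lo..<u}. leg1_weight m k * f k) + (\<Sum>k\<in>{lo..<Suc hi}. leg2_weight m u k * f k)
     + (\<Sum>k\<in>{lo..<Suc hi}. leg3_weight m k * f k) = (\<Sum>k\<in>{lo..<Suc hi}. m k * f k)"
proof -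
  have "{k\<in>{lo..<Suc hi}. k < u} = {lo..<u}" using u_hi by auto
  then have "(\<Sum>k\<in>{lo..<u}. leg1_weight m k * f k) = (\<Sum>k\<in>{lo..<Suc hi}. if k < u then leg1_weight m k * f k else 0)"
    by (metis (no_types) sum.inter_filter finite_atLeastLessThan)
  then have "(\<Sum>k\<in>{lo..<u}. leg1_weight m k * f k) + (\<Sum>k\<in>{lo..<Suc hi}. leg2_weight m u k * f k)
      + (\<Sum>k\<in>{lo..<Suc hi}. leg3_weight m k * f k) = (\<Sum>k\<in>{lo..<Suc hi}.
        (if k < u then leg1_weight m k * f k else 0) + leg2_weight m u k * f k + leg3_weight m k * f k)"
    by (simp add: sum.distrib)
  also have "\<dots> = (\<Sum>k\<in>{lo..<Suc hi}. m k * f k)"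
    by (rule sum.cong) (auto simp: leg1_weight_def leg2_weight_def leg3_weight_def field_simps)
  finally show ?thesis .
qed

lemma len_eq: "len = (\<Sum>k\<in>{lo..<Suc hi}. m k)"
  using sum_leg_weights[of "\<lambda>_. 1"] unfolding step_mass_def by simp

lemma sum_leg_cdfs: "leg1.F a + leg2.F a + leg3.F a = (\<Sum>k\<in>{lo..<Suc hi}. m k * ramp (real N * a - real k))"
  using sum_leg_weights[of "\<lambda>k. ramp (real N * a - real k)"] unfolding step_cdf_def by (simp add: mult.assoc)

lemma zigzag_leg1: "t \<in> {0..leg1.mass} \<Longrightarrow> zigzag N m lo hi u t = leg1.Q (leg1.mass - t)"
  unfolding zigzag_def by simp

lemma zigzag_leg2: assumes "t \<in> {leg1.mass..leg1.mass + leg2.mass}"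
  shows "zigzag N m lo hi u t = leg2.Q (t - leg1.mass)"
  using assms leg1.quantile_0 leg2.quantile_0 unfolding zigzag_def by (cases "t \<le> leg1.mass") auto

lemma zigzag_leg3: assumes "t \<in> {leg1.mass + leg2.mass..len}"
  shows "zigzag N m lo hi u t = leg3.Q (len - t)"
  using assms leg2_mass_pos leg2.quantile_mass leg3.quantile_mass leg1.mass_nonneg
  unfolding zigzag_def by (cases "t \<le> leg1.mass + leg2.mass") (auto simp: Let_def)

lemma grid_points: "grid_point N (real u / real N)" "grid_point N (real lo / real N)"
  "grid_point N (real (Suc hi) / real N)"
  using u_hi lo_hi hi_N unfolding grid_point_def by auto

definition "min_leg = (if 0 < leg1.mass then min leg1.mass (min leg2.mass leg3.mass) else min leg2.mass leg3.mass)"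

lemma min_leg_pos: "0 < min_leg"
  unfolding min_leg_def using leg2_mass_pos leg3_mass_pos by auto

lemma zigzag_forward:
  fixes G :: "real \<Rightarrow> real"
  assumes G: "\<And>x. x \<in> {p..p+len} \<Longrightarrow> G x = zigzag N m lo hi u (x - p)"
  shows "continuous_on {p..p+len} G" "covered_by_laps G N p (p+len) min_leg"
    and "\<And>x. x \<in> {p..p+len} \<Longrightarrow> G x \<in> {real lo / real N..real (Suc hi) / real N}"
    and "measure lebesgue {x\<in>{p..p+len}. G x \<le> a} = (\<Sum>k\<in>{lo..<Suc hi}. m k * ramp (real N * a - real k))"
    and "G p = real u / real N" "G (p+len) = real lo / real N"
    and "\<And>s. s \<in> {0..leg3.mass} \<Longrightarrow> G (p + len - s) = leg3.Q s"
proof -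
  define q1 q2 where "q1 = p + leg1.mass" and "q2 = q1 + leg2.mass"
  have q: "p \<le> q1" "q1 \<le> q2" "q2 \<le> p + len" "p + len = q2 + leg3.mass"
    unfolding q1_def q2_def using leg1.mass_nonneg leg2_mass_pos leg3_mass_pos by auto
  have G1: "G x = leg1.Q (p + leg1.mass - x)" if "x \<in> {p..p + leg1.mass}" for x
    using G[of x] zigzag_leg1[of "x - p"] that q unfolding q1_def by (auto simp: algebra_simps)
  note leg1 = leg1.decreasing_leg[of p G, OF G1, folded q1_def]
  have G2: "G x = leg2.Q (x - q1)" if "x \<in> {q1..q1 + leg2.mass}" for x
    using G[of x] zigzag_leg2[of "x - p"] that q unfolding q1_def by (auto simp: algebra_simps)
  note leg2 = leg2.increasing_leg[of q1 G, OF G2, folded q2_def]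
  have G3: "G x = leg3.Q (q2 + leg3.mass - x)" if "x \<in> {q2..q2 + leg3.mass}" for x
    using G[of x] zigzag_leg3[of "x - p"] that q unfolding q1_def q2_def by (auto simp: algebra_simps)
  note leg3 = leg3.decreasing_leg[of q2 G, OF G3, folded q(4)]
  have laps: "expanding_lap G N p q1" "expanding_lap G N q1 q2" "expanding_lap G N q2 (p+len)"
    unfolding expanding_lap_def using leg1(1-4) leg2(1-4) leg3(1-4) grid_points by auto
  have "q1 - p = 0 \<or> min_leg \<le> q1 - p" "min_leg \<le> q2 - q1" "min_leg \<le> p + len - q2"
    unfolding min_leg_def q1_def q2_def q(4) using leg1.mass_nonneg by auto
  then show "covered_by_laps G N p (p+len) min_leg" and cont: "continuous_on {p..p+len} G"
    using covered_by_three_laps[OF q(1-3) laps] by auto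
  show "G x \<in> {real lo / real N..real (Suc hi) / real N}" if "x \<in> {p..p+len}" for x
  proof -
    have "real u / real N \<le> real (Suc hi) / real N" using u_hi by (simp add: divide_right_mono)
    moreover have "x \<in> {p..q1} \<or> x \<in> {q1..q2} \<or> x \<in> {q2..p+len}" using that by auto
    ultimately show ?thesis using leg1(5)[of x] leg2(5)[of x] leg3(5)[of x] by (elim disjE) auto
  qed
  have c2: "continuous_on {p..q2} G" by (rule continuous_on_subset[OF cont]) (use q in auto)
  have "measure lebesgue {x\<in>{p..p+len}. G x \<le> a} = measure lebesgue {x\<in>{p..q1}. G x \<le> a}
      + measure lebesgue {x\<in>{q1..q2}. G x \<le> a} + measure lebesgue {x\<in>{q2..p+len}. G x \<le> a}"
    unfolding measure_sublevel_split[OF order_trans[OF q(1,2)] q(3) cont] measure_sublevel_split[OF q(1,2) c2] ..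
  also have "\<dots> = (\<Sum>k\<in>{lo..<Suc hi}. m k * ramp (real N * a - real k))"
    using leg1(6)[of a] leg2(6)[of a] leg3(6)[of a] sum_leg_cdfs[of a] by linarith
  finally show "measure lebesgue {x\<in>{p..p+len}. G x \<le> a} = (\<Sum>k\<in>{lo..<Suc hi}. m k * ramp (real N * a - real k))" .
  show "G p = real u / real N" "G (p+len) = real lo / real N" using leg1(3) leg3(4) by auto
  show "G (p + len - s) = leg3.Q s" if "s \<in> {0..leg3.mass}" for s
  proof -
    have "G (p + len - s) = leg3.Q (q2 + leg3.mass - (p + len - s))"
      by (rule G3) (use that q(4) in auto)
    also have "q2 + leg3.mass - (p + len - s) = s" using q(4) by linarith
    finally show ?thesis .
  qed
qed

lemma zigzag_backward:
  fixes G :: "real \<Rightarrow> real"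
  assumes G: "\<And>x. x \<in> {p..p+len} \<Longrightarrow> G x = zigzag N m lo hi u (p + len - x)"
  shows "continuous_on {p..p+len} G" "covered_by_laps G N p (p+len) min_leg"
    and "\<And>x. x \<in> {p..p+len} \<Longrightarrow> G x \<in> {real lo / real N..real (Suc hi) / real N}"
    and "measure lebesgue {x\<in>{p..p+len}. G x \<le> a} = (\<Sum>k\<in>{lo..<Suc hi}. m k * ramp (real N * a - real k))"
    and "G p = real lo / real N" "G (p+len) = real u / real N"
    and "\<And>s. s \<in> {0..leg3.mass} \<Longrightarrow> G (p + s) = leg3.Q s"
proof -
  define q where "q = p + len"
  define G0 where "G0 x = zigzag N m lo hi u (x - p)" for x
  note forward = zigzag_forward[of p G0, unfolded G0_def, OF refl, folded G0_def q_def]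
  have G': "G x = G0 (p + q - x)" if "x \<in> {p..q}" for x
    using G that unfolding G0_def q_def by (simp add: algebra_simps)
  have "p \<le> q" unfolding q_def using leg1.mass_nonneg leg2_mass_pos leg3_mass_pos by simp
  show "continuous_on {p..p+len} G"
    unfolding q_def[symmetric] by (rule continuous_on_reflect[OF forward(1) G'])
  show "covered_by_laps G N p (p+len) min_leg"
    unfolding q_def[symmetric] by (rule covered_by_laps_reflect[OF forward(2) G'])
  show "G x \<in> {real lo / real N..real (Suc hi) / real N}" if "x \<in> {p..p+len}" for x
  proof -
    have "x \<in> {p..q}" "p + q - x \<in> {p..q}" using that unfolding q_def by auto
    then show ?thesis using G' forward(3) by simp
  qed
  have "measure lebesgue {x\<in>{p..p+len}. G x \<le> a} = measure lebesgue {x\<in>{p..q}. G0 x \<le> a}"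
    unfolding q_def[symmetric] by (rule measure_sublevel_reflect) (rule G')
  also have "\<dots> = (\<Sum>k\<in>{lo..<Suc hi}. m k * ramp (real N * a - real k))" by (rule forward(4))
  finally show "measure lebesgue {x\<in>{p..p+len}. G x \<le> a} = (\<Sum>k\<in>{lo..<Suc hi}. m k * ramp (real N * a - real k))" .
  show "G p = real lo / real N" "G (p+len) = real u / real N"
    using G'[of p] G'[of q] forward(5,6) \<open>p \<le> q\<close> unfolding q_def[symmetric] by auto
  show "G (p + s) = leg3.Q s" if "s \<in> {0..leg3.mass}" for s
  proof -
    have "leg3.mass \<le> q - p" unfolding q_def using leg1.mass_nonneg leg2_mass_pos by simp
    then have "G (p + s) = G0 (p + q - (p + s))" using G'[of "p + s"] that by auto
    then have "G (p + s) = G0 (q - s)" by simp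
    then show ?thesis using forward(7)[OF that] by simp
  qed
qed

lemma zigzag_placed:
  fixes G :: "real \<Rightarrow> real"
  assumes G: "\<forall>x\<in>{p..p+len}. G x = (if b then zigzag N m lo hi u (x - p) else zigzag N m lo hi u (p + len - x))"
  shows "continuous_on {p..p+len} G" "covered_by_laps G N p (p+len) min_leg"
    "\<And>x. x \<in> {p..p+len} \<Longrightarrow> G x \<in> {real lo / real N..real (Suc hi) / real N}"
    "measure lebesgue {x\<in>{p..p+len}. G x \<le> a} = (\<Sum>k\<in>{lo..<Suc hi}. m k * ramp (real N * a - real k))"
proof -
  have "continuous_on {p..p+len} G \<and> covered_by_laps G N p (p+len) min_leg \<and>
    (\<forall>x\<in>{p..p+len}. G x \<in> {real lo / real N..real (Suc hi) / real N}) \<and>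
    measure lebesgue {x\<in>{p..p+len}. G x \<le> a} = (\<Sum>k\<in>{lo..<Suc hi}. m k * ramp (real N * a - real k))"
  proof (cases b)
    case True
    then have "\<And>x. x \<in> {p..p+len} \<Longrightarrow> G x = zigzag N m lo hi u (x - p)" using G by simp
    note placed = zigzag_forward[OF this]
    show ?thesis using placed(1-4) by blast
  next
    case False
    then have "\<And>x. x \<in> {p..p+len} \<Longrightarrow> G x = zigzag N m lo hi u (p + len - x)" using G by simp
    note placed = zigzag_backward[OF this]
    show ?thesis using placed(1-4) by blast
  qed
  then show "continuous_on {p..p+len} G" "covered_by_laps G N p (p+len) min_leg"
    "\<And>x. x \<in> {p..p+len} \<Longrightarrow> G x \<in> {real lo / real N..real (Suc hi) / real N}"
    "measure lebesgue {x\<in>{p..p+len}. G x \<le> a} = (\<Sum>k\<in>{lo..<Suc hi}. m k * ramp (real N * a - real k))"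
    by blast+
qed

end

section \<open>The mass matrix of a measure preserving map\<close>

lemma measure_sublevel_chain:
  fixes G :: "real \<Rightarrow> real" and t :: "nat \<Rightarrow> real"
  assumes mono: "\<And>i. t i \<le> t (Suc i)" and cont: "continuous_on {t 0..t n} G"
  shows "measure lebesgue {x\<in>{t 0..t n}. G x \<le> a} = (\<Sum>i<n. measure lebesgue {x\<in>{t i..t (Suc i)}. G x \<le> a})"
  using cont
proof (induction n)
  case 0
  have "{x\<in>{t 0..t 0}. G x \<le> a} \<subseteq> {t 0}" by auto
  then have "measure lebesgue {x\<in>{t 0..t 0}. G x \<le> a} \<le> measure lebesgue {t 0}"
    by (rule measure_mono_fmeasurable)
      (use lmeasurable_compact[OF compact_sublevel_Icc[OF "0.prems"]] lmeasurable_compact[OF compact_sing] in auto)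
  then show ?case by (simp add: measure_le_0_iff)
next
  case (Suc n)
  have "t 0 \<le> t n" using mono by (rule lift_Suc_mono_le) simp
  then have "measure lebesgue {x\<in>{t 0..t (Suc n)}. G x \<le> a}
      = measure lebesgue {x\<in>{t 0..t n}. G x \<le> a} + measure lebesgue {x\<in>{t n..t (Suc n)}. G x \<le> a}"
    using mono Suc.prems by (intro measure_sublevel_split)
  also have "measure lebesgue {x\<in>{t 0..t n}. G x \<le> a} = (\<Sum>i<n. measure lebesgue {x\<in>{t i..t (Suc i)}. G x \<le> a})"
    using mono by (intro Suc.IH continuous_on_subset[OF Suc.prems]) auto
  finally show ?case by simp
qed

lemma measure_preimage_open_interval_pos:
  fixes f :: "real \<Rightarrow> real"
  assumes cont: "continuous_on {s..t} f" and "s < t" and x1: "x1 \<in> {s..t}" "a < f x1" "f x1 < b"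
  shows "0 < measure lebesgue {x\<in>{s..t}. f x \<in> {a<..<b}}"
proof -
  have "0 < min (f x1 - a) (b - f x1)" using x1 by auto
  then obtain \<eta> where \<eta>: "\<eta> > 0" "\<forall>x\<in>{s..t}. dist x x1 < \<eta> \<longrightarrow> dist (f x) (f x1) < min (f x1 - a) (b - f x1)"
    using cont x1(1) unfolding continuous_on_iff by blast
  define J where "J = {max s (x1 - \<eta>/2) .. min t (x1 + \<eta>/2)}"
  have sub: "J \<subseteq> {x\<in>{s..t}. f x \<in> {a<..<b}}"
  proof
    fix x assume x: "x \<in> J"
    then have "x \<in> {s..t}" "dist x x1 < \<eta>" using \<eta>(1) unfolding J_def dist_real_def by auto
    then have "\<bar>f x - f x1\<bar> < min (f x1 - a) (b - f x1)" using \<eta>(2) unfolding dist_real_def by blast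
    then show "x \<in> {x\<in>{s..t}. f x \<in> {a<..<b}}" using \<open>x \<in> {s..t}\<close> by auto
  qed
  have "{x\<in>{s..t}. f x \<in> {a<..<b}} \<in> lmeasurable"
  proof (rule fmeasurableI2[of "{s..t}"])
    show "{x\<in>{s..t}. f x \<in> {a<..<b}} \<in> sets lebesgue"
      using preimage_Icc_borel[OF cont, of "{a<..<b}"] by (simp add: sets_completionI_sets)
  qed auto
  then have "measure lebesgue J \<le> measure lebesgue {x\<in>{s..t}. f x \<in> {a<..<b}}"
    by (intro measure_mono_fmeasurable[OF sub]) (simp_all add: J_def)
  moreover have "0 < measure lebesgue J" unfolding J_def using \<open>s < t\<close> x1 \<eta>(1) by (simp add: max_def min_def)
  ultimately show ?thesis by linarith
qed

text \<open>The cells \<open>cell N i\<close> (\<open>i \<le> N\<close>) tile \<open>I\<close>: the inner ones are \<open>[(2i-1)/2N, (2i+1)/2N]\<close>, centred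
  at the grid point \<open>i/N\<close>, and the outer two are the half cells \<open>[0, 1/2N]\<close> and \<open>[1 - 1/2N, 1]\<close>.
  \<open>cell_mass f N i k\<close> is the measure of the part of \<open>cell N i\<close> that \<open>f\<close> maps into \<open>[k/N, (k+1)/N]\<close>,
  and \<open>cell_lo\<close>, \<open>cell_hi\<close> are the first and last \<open>k\<close> for which it is positive.\<close>

definition cell_bound :: "nat \<Rightarrow> nat \<Rightarrow> real" where
  "cell_bound N i = min 1 (max 0 ((2 * real i - 1) / (2 * real N)))"

definition cell :: "nat \<Rightarrow> nat \<Rightarrow> real set" where
  "cell N i = {cell_bound N i .. cell_bound N (Suc i)}"

definition cell_cdf :: "(real \<Rightarrow> real) \<Rightarrow> nat \<Rightarrow> nat \<Rightarrow> real \<Rightarrow> real" where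
  "cell_cdf f N i v = measure lebesgue {x\<in>cell N i. f x \<le> v}"

definition cell_mass :: "(real \<Rightarrow> real) \<Rightarrow> nat \<Rightarrow> nat \<Rightarrow> nat \<Rightarrow> real" where
  "cell_mass f N i k = cell_cdf f N i ((real k + 1) / real N) - cell_cdf f N i (real k / real N)"

definition cell_min :: "(real \<Rightarrow> real) \<Rightarrow> nat \<Rightarrow> nat \<Rightarrow> real" where
  "cell_min f N i = Inf (f ` cell N i)"

definition cell_max :: "(real \<Rightarrow> real) \<Rightarrow> nat \<Rightarrow> nat \<Rightarrow> real" where
  "cell_max f N i = Sup (f ` cell N i)"

definition cell_lo :: "(real \<Rightarrow> real) \<Rightarrow> nat \<Rightarrow> nat \<Rightarrow> nat" where
  "cell_lo f N i = nat \<lfloor>real N * cell_min f N i\<rfloor>"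

definition cell_hi :: "(real \<Rightarrow> real) \<Rightarrow> nat \<Rightarrow> nat \<Rightarrow> nat" where
  "cell_hi f N i = nat \<lceil>real N * cell_max f N i\<rceil> - 1"

locale cell_partition =
  fixes f :: "real \<Rightarrow> real" and N :: nat
  assumes f: "f \<in> C_lambda" and N: "N > 0"
begin

lemma f_cont: "continuous_on unitI f"
  and f_maps: "\<And>x. x \<in> unitI \<Longrightarrow> f x \<in> unitI"
  and f_lp: "lambda_preserving f"
  using f unfolding C_lambda_def by (auto simp: image_subset_iff)

lemma cell_bound_0: "cell_bound N 0 = 0"
  unfolding cell_bound_def using N by (simp add: field_simps)

lemma cell_bound_last: "cell_bound N (Suc N) = 1"
  unfolding cell_bound_def using N by (simp add: field_simps)

lemma cell_bound_eq: "1 \<le> i \<Longrightarrow> i \<le> N \<Longrightarrow> cell_bound N i = (2 * real i - 1) / (2 * real N)"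
  unfolding cell_bound_def using N by (auto simp: field_simps)

lemma cell_bound_range: "0 \<le> cell_bound N i" "cell_bound N i \<le> 1"
  unfolding cell_bound_def by auto

lemma cell_bound_mono: "cell_bound N i \<le> cell_bound N (Suc i)"
proof -
  have "(2 * real i - 1) / (2 * real N) \<le> (2 * real (Suc i) - 1) / (2 * real N)"
    using N by (intro divide_right_mono) auto
  then show ?thesis unfolding cell_bound_def by (rule min.mono[OF order_refl max.mono[OF order_refl]])
qed

lemma cell_length:
  assumes i: "i \<le> N"
  shows "cell_bound N (Suc i) - cell_bound N i = (if i = 0 \<or> i = N then 1 / (2 * real N) else 1 / real N)"
proof -
  consider "i = 0" | "i = N" | "0 < i" "i < N" using i by linarith
  then show ?thesis
  proof cases
    case 1 then show ?thesis using cell_bound_eq[of 1] N cell_bound_0 by (simp add: field_simps)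
  next
    case 2 then show ?thesis using cell_bound_eq[of N] N cell_bound_last by (auto simp: field_simps)
  next
    case 3 then show ?thesis using cell_bound_eq[of i] cell_bound_eq[of "Suc i"] N by (auto simp: field_simps)
  qed
qed

lemma cell_bound_less: "i \<le> N \<Longrightarrow> cell_bound N i < cell_bound N (Suc i)"
  using cell_length N by (simp add: algebra_simps)

lemma cell_subset: "cell N i \<subseteq> unitI"
  unfolding cell_def using cell_bound_range by auto

lemma cell_mem: "x \<in> cell N i \<Longrightarrow> 0 \<le> x \<and> x \<le> 1"
  using cell_subset[of i] by auto

lemma continuous_on_cell: "continuous_on (cell N i) f"
  using f_cont cell_subset by (rule continuous_on_subset)

lemma measure_cell: "measure lebesgue (cell N i) = cell_bound N (Suc i) - cell_bound N i"
  unfolding cell_def using cell_bound_mono by simp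

lemma level_set_null: "measure lebesgue {x\<in>unitI. f x = c} = 0" "{x\<in>unitI. f x = c} \<in> lmeasurable"
proof -
  have "{x\<in>unitI. f x = c} \<in> sets lebesgue \<and> measure lebesgue {x\<in>unitI. f x = c} = 0"
  proof (cases "c \<in> unitI")
    case True
    then have "{c} \<in> sets lebesgue \<and> {c} \<subseteq> unitI" by auto
    then have "{x\<in>unitI. f x \<in> {c}} \<in> sets lebesgue \<and> measure lebesgue {x\<in>unitI. f x \<in> {c}} = measure lebesgue {c}"
      using f_lp unfolding lambda_preserving_def by blast
    then show ?thesis by simp
  next
    case False
    then have empty: "{x\<in>unitI. f x = c} = {}" using f_maps by auto
    show ?thesis unfolding empty by simp
  qed
  moreover have "unitI \<in> lmeasurable" by simp
  ultimately show "measure lebesgue {x\<in>unitI. f x = c} = 0" "{x\<in>unitI. f x = c} \<in> lmeasurable"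
    by (auto intro: fmeasurableI2[of "unitI"])
qed

lemma measure_subset_level_set:
  assumes "S \<subseteq> {x\<in>unitI. f x = c}" "S \<in> sets lebesgue"
  shows "measure lebesgue S = 0"
proof -
  have "measure lebesgue S \<le> measure lebesgue {x\<in>unitI. f x = c}"
    by (rule measure_mono_fmeasurable[OF assms level_set_null(2)])
  then show ?thesis using level_set_null(1)[of c] measure_nonneg[of lebesgue S] by linarith
qed

lemma image_cell:
  assumes "i \<le> N"
  shows "f ` cell N i = {cell_min f N i .. cell_max f N i}" "cell_min f N i \<le> cell_max f N i"
proof -
  obtain c d where cd: "f ` {cell_bound N i..cell_bound N (Suc i)} = {c..d}" "c \<le> d"
    using continuous_image_closed_interval[OF cell_bound_mono continuous_on_cell[unfolded cell_def]] by blast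
  then have "cell_min f N i = c" "cell_max f N i = d" unfolding cell_min_def cell_max_def cell_def by auto
  then show "f ` cell N i = {cell_min f N i .. cell_max f N i}" "cell_min f N i \<le> cell_max f N i"
    using cd unfolding cell_def by auto
qed

lemma cell_min_max_bounds:
  assumes "i \<le> N" "x \<in> cell N i" shows "cell_min f N i \<le> f x \<and> f x \<le> cell_max f N i"
proof -
  have "f x \<in> f ` cell N i" using assms(2) by (rule imageI)
  then show ?thesis unfolding image_cell(1)[OF assms(1)] by simp
qed

lemma cell_min_max_attained:
  assumes "i \<le> N"
  shows "\<exists>x\<in>cell N i. f x = cell_min f N i" "\<exists>x\<in>cell N i. f x = cell_max f N i"
proof -
  have "cell_min f N i \<in> f ` cell N i" "cell_max f N i \<in> f ` cell N i"
    unfolding image_cell(1)[OF assms] using image_cell(2)[OF assms] by auto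
  then show "\<exists>x\<in>cell N i. f x = cell_min f N i" "\<exists>x\<in>cell N i. f x = cell_max f N i"
    by (auto simp: image_iff)
qed

lemma cell_min_max_range:
  assumes "i \<le> N" shows "0 \<le> cell_min f N i" "cell_max f N i \<le> 1"
proof -
  obtain x y where "x \<in> cell N i" "f x = cell_min f N i" "y \<in> cell N i" "f y = cell_max f N i"
    using cell_min_max_attained[OF assms] by blast
  then show "0 \<le> cell_min f N i" "cell_max f N i \<le> 1"
    using f_maps[of x] f_maps[of y] cell_mem[of x i] cell_mem[of y i] by auto
qed

text \<open>A cell has positive length, and level sets of \<open>f\<close> are null, so \<open>f\<close> is not constant on it.\<close>

lemma cell_min_less_max:
  assumes i: "i \<le> N" shows "cell_min f N i < cell_max f N i"
proof (rule ccontr)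
  assume "\<not> cell_min f N i < cell_max f N i"
  then have "\<And>x. x \<in> cell N i \<Longrightarrow> f x = cell_min f N i"
    using cell_min_max_bounds[OF i] by (meson antisym not_le order_trans)
  then have "measure lebesgue (cell N i) = 0"
    by (intro measure_subset_level_set[of _ "cell_min f N i"]) (auto simp: cell_def cell_mem)
  then show False using measure_cell cell_bound_less[OF i] by simp
qed

lemma cell_sublevel_lmeasurable: "{x\<in>cell N i. f x \<le> v} \<in> lmeasurable"
  unfolding cell_def by (rule lmeasurable_compact, rule compact_sublevel_Icc)
    (use continuous_on_cell in \<open>auto simp: cell_def\<close>)

lemma cell_cdf_mono: "v \<le> w \<Longrightarrow> cell_cdf f N i v \<le> cell_cdf f N i w"
  unfolding cell_cdf_def
  by (rule measure_mono_fmeasurable[OF _ fmeasurableD[OF cell_sublevel_lmeasurable] cell_sublevel_lmeasurable]) auto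

lemma cell_cdf_below:
  assumes i: "i \<le> N" and v: "v \<le> cell_min f N i" shows "cell_cdf f N i v = 0"
  unfolding cell_cdf_def
proof (rule measure_subset_level_set[of _ "cell_min f N i"])
  show "{x \<in> cell N i. f x \<le> v} \<subseteq> {x \<in> unitI. f x = cell_min f N i}"
  proof
    fix x assume x: "x \<in> {x \<in> cell N i. f x \<le> v}"
    then have "f x = cell_min f N i" using cell_min_max_bounds[OF i, of x] v by auto
    then show "x \<in> {x \<in> unitI. f x = cell_min f N i}" using x cell_mem[of x i] by auto
  qed
qed (use cell_sublevel_lmeasurable in \<open>auto intro: fmeasurableD\<close>)

lemma cell_cdf_above:
  assumes i: "i \<le> N" and v: "cell_max f N i \<le> v" shows "cell_cdf f N i v = cell_bound N (Suc i) - cell_bound N i"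
proof -
  have "{x\<in>cell N i. f x \<le> v} = cell N i" using cell_min_max_bounds[OF i] v by (auto intro: order_trans)
  then show ?thesis unfolding cell_cdf_def using measure_cell by simp
qed

lemma cell_mass_le:
  assumes i: "i \<le> N" shows "cell_mass f N i k \<le> cell_bound N (Suc i) - cell_bound N i"
proof -
  have "cell_cdf f N i ((real k + 1) / real N) \<le> cell_cdf f N i (max 1 ((real k + 1) / real N))"
    by (rule cell_cdf_mono) simp
  also have "\<dots> = cell_bound N (Suc i) - cell_bound N i"
    using cell_min_max_range[OF i] by (intro cell_cdf_above[OF i]) auto
  finally have "cell_cdf f N i ((real k + 1) / real N) \<le> cell_bound N (Suc i) - cell_bound N i" .
  moreover have "0 \<le> cell_cdf f N i (real k / real N)" unfolding cell_cdf_def by (rule measure_nonneg)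
  ultimately show ?thesis unfolding cell_mass_def by linarith
qed

lemma cell_level_bounds:
  assumes i: "i \<le> N"
  shows "real (cell_lo f N i) \<le> real N * cell_min f N i" "real N * cell_min f N i < real (cell_lo f N i) + 1"
    "real N * cell_max f N i \<le> real (Suc (cell_hi f N i))" "real (Suc (cell_hi f N i)) < real N * cell_max f N i + 1"
    "Suc (cell_hi f N i) \<le> N" "cell_lo f N i \<le> cell_hi f N i"
proof -
  have lo_eq: "real (cell_lo f N i) = of_int \<lfloor>real N * cell_min f N i\<rfloor>"
    unfolding cell_lo_def using cell_min_max_range[OF i] by simp
  have less: "real N * cell_min f N i < real N * cell_max f N i" using cell_min_less_max[OF i] N by simp
  moreover have "0 \<le> real N * cell_min f N i" using cell_min_max_range[OF i] by simp
  ultimately have "0 < real N * cell_max f N i" by linarith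
  then have "1 \<le> \<lceil>real N * cell_max f N i\<rceil>" by linarith
  then have hi_eq: "real (Suc (cell_hi f N i)) = of_int \<lceil>real N * cell_max f N i\<rceil>"
    unfolding cell_hi_def by (simp add: of_nat_diff)
  show lo: "real (cell_lo f N i) \<le> real N * cell_min f N i" "real N * cell_min f N i < real (cell_lo f N i) + 1"
    unfolding lo_eq by linarith+
  show hi: "real N * cell_max f N i \<le> real (Suc (cell_hi f N i))" "real (Suc (cell_hi f N i)) < real N * cell_max f N i + 1"
    unfolding hi_eq by linarith+
  have "real N * cell_max f N i \<le> real N" using cell_min_max_range[OF i] N by simp
  then have "\<lceil>real N * cell_max f N i\<rceil> \<le> int N" by (simp add: ceiling_le_iff)
  then show "Suc (cell_hi f N i) \<le> N" using hi_eq by linarith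
  show "cell_lo f N i \<le> cell_hi f N i" using lo(1) hi(1) less by linarith
qed

lemma cell_mass_below:
  assumes i: "i \<le> N" and k: "k < cell_lo f N i"
  shows "cell_mass f N i k = 0"
proof -
  have "real k + 1 \<le> real (cell_lo f N i)" using k by linarith
  then have "real k + 1 \<le> real N * cell_min f N i" using cell_level_bounds(1)[OF i] by linarith
  then have a: "(real k + 1) / real N \<le> cell_min f N i" using N by (simp add: field_simps)
  moreover have "real k / real N \<le> (real k + 1) / real N" using N by (simp add: divide_right_mono)
  ultimately show ?thesis unfolding cell_mass_def using cell_cdf_below[OF i] by simp
qed

lemma cell_mass_above:
  assumes i: "i \<le> N" and k: "cell_hi f N i < k"
  shows "cell_mass f N i k = 0"
proof -
  have "real (Suc (cell_hi f N i)) \<le> real k" using k by simp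
  then have "real N * cell_max f N i \<le> real k" using cell_level_bounds(3)[OF i] by linarith
  then have a: "cell_max f N i \<le> real k / real N" using N by (simp add: field_simps)
  moreover have "real k / real N \<le> (real k + 1) / real N" using N by (simp add: divide_right_mono)
  ultimately show ?thesis unfolding cell_mass_def using cell_cdf_above[OF i] by simp
qed

lemma cell_mass_pos:
  assumes i: "i \<le> N" and k: "cell_lo f N i \<le> k" "k \<le> cell_hi f N i"
  shows "0 < cell_mass f N i k"
proof -
  define a b where "a = max (cell_min f N i) (real k / real N)" and "b = min (cell_max f N i) ((real k + 1) / real N)"
  have "real N * cell_min f N i < real k + 1" "real k < real N * cell_max f N i"
    using cell_level_bounds(2,4)[OF i] k by linarith+
  then have "a < b" unfolding a_def b_def using cell_min_less_max[OF i] N by (auto simp: field_simps)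
  then have "(a + b) / 2 \<in> f ` cell N i" unfolding image_cell(1)[OF i] a_def b_def by auto
  then obtain x1 where x1: "x1 \<in> cell N i" "a < f x1" "f x1 < b" using \<open>a < b\<close> by auto
  have "0 < measure lebesgue {x\<in>cell N i. f x \<in> {real k / real N<..<(real k + 1) / real N}}"
    using measure_preimage_open_interval_pos[of "cell_bound N i" "cell_bound N (Suc i)" f x1]
      continuous_on_cell cell_bound_less[OF i] x1 unfolding cell_def a_def b_def by auto
  also have "\<dots> \<le> measure lebesgue ({x\<in>cell N i. f x \<le> (real k + 1) / real N} - {x\<in>cell N i. f x \<le> real k / real N})"
  proof (intro measure_mono_fmeasurable)
    show "{x\<in>cell N i. f x \<in> {real k / real N<..<(real k + 1) / real N}} \<in> sets lebesgue"
      using preimage_Icc_borel[OF continuous_on_cell[of i, unfolded cell_def], of "{real k / real N<..<(real k + 1) / real N}"]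
      unfolding cell_def by (auto intro: sets_completionI_sets)
  qed (auto intro: cell_sublevel_lmeasurable)
  also have "\<dots> = cell_mass f N i k"
    unfolding cell_mass_def cell_cdf_def
  proof (rule measure_Diff)
    show "emeasure lebesgue {x\<in>cell N i. f x \<le> (real k + 1) / real N} \<noteq> \<infinity>"
      using fmeasurableD2[OF cell_sublevel_lmeasurable] by simp
    have "real k / real N \<le> (real k + 1) / real N" using N by (simp add: divide_right_mono)
    then show "{x\<in>cell N i. f x \<le> real k / real N} \<subseteq> {x\<in>cell N i. f x \<le> (real k + 1) / real N}" by auto
  qed (auto intro: fmeasurableD cell_sublevel_lmeasurable)
  finally show ?thesis .
qed

lemma sum_cell_mass_row:
  assumes i: "i \<le> N"
  shows "(\<Sum>k<N. cell_mass f N i k) = cell_bound N (Suc i) - cell_bound N i"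
proof -
  have "(\<Sum>k<N. cell_mass f N i k) = (\<Sum>k<N. cell_cdf f N i (real (Suc k) / real N) - cell_cdf f N i (real k / real N))"
    unfolding cell_mass_def by (simp add: add.commute)
  also have "\<dots> = cell_cdf f N i (real N / real N) - cell_cdf f N i (real 0 / real N)"
    by (rule sum_lessThan_telescope)
  also have "\<dots> = cell_bound N (Suc i) - cell_bound N i"
    using N cell_min_max_range[OF i] cell_cdf_above[OF i, of 1] cell_cdf_below[OF i, of 0] by simp
  finally show ?thesis .
qed

lemma sum_cell_cdf_column:
  assumes v: "v \<in> unitI"
  shows "(\<Sum>i\<le>N. cell_cdf f N i v) = v"
proof -
  have "measure lebesgue {x\<in>{cell_bound N 0..cell_bound N (Suc N)}. f x \<le> v} = (\<Sum>i<Suc N. measure lebesgue {x\<in>{cell_bound N i..cell_bound N (Suc i)}. f x \<le> v})"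
    by (rule measure_sublevel_chain) (use cell_bound_mono f_cont cell_bound_0 cell_bound_last in auto)
  then have e1: "measure lebesgue {x\<in>unitI. f x \<le> v} = (\<Sum>i\<le>N. cell_cdf f N i v)"
    unfolding cell_cdf_def cell_def cell_bound_0 cell_bound_last lessThan_Suc_atMost .
  have A: "{0..v} \<in> sets lebesgue \<and> {0..v} \<subseteq> unitI" using v by auto
  have "measure lebesgue {x\<in>unitI. f x \<in> {0..v}} = measure lebesgue {0..v}"
    using f_lp A unfolding lambda_preserving_def by blast
  moreover have "{x\<in>unitI. f x \<in> {0..v}} = {x\<in>unitI. f x \<le> v}" using f_maps by auto
  ultimately show ?thesis using e1 v by simp
qed

lemma sum_cell_mass_column:
  assumes k: "k < N"
  shows "(\<Sum>i\<le>N. cell_mass f N i k) = 1 / real N"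
proof -
  have v1: "(real k + 1) / real N \<in> unitI" "real k / real N \<in> unitI" using k N by (auto simp: field_simps)
  have "(\<Sum>i\<le>N. cell_mass f N i k) = (\<Sum>i\<le>N. cell_cdf f N i ((real k + 1) / real N)) - (\<Sum>i\<le>N. cell_cdf f N i (real k / real N))"
    unfolding cell_mass_def by (simp add: sum_subtractf)
  also have "\<dots> = (real k + 1) / real N - real k / real N" using sum_cell_cdf_column[OF v1(1)] sum_cell_cdf_column[OF v1(2)] by simp
  also have "\<dots> = 1 / real N" by (simp add: diff_divide_distrib[symmetric])
  finally show ?thesis .
qed

end

section \<open>The approximating map\<close>

text \<open>The unit intervals \<open>[j/2N, (j+1)/2N]\<close> (\<open>j < 2N\<close>) halve the inner cells; unit \<open>j\<close> lies in cell
  \<open>cell_of_unit j\<close> and carries its share of that cell's masses. On it the approximating map is the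
  zigzag of these masses, traversed forwards on the left half of a cell (odd \<open>j\<close>) and backwards on
  the right half (even \<open>j\<close>). The two halves of a cell thus meet at its centre \<open>k/N\<close> in mirror
  images of the same third leg, which is the fold at \<open>k/N\<close>; neighbouring halves of adjacent cells
  meet at the level \<open>unit_start\<close> determined by \<open>f\<close> at the common cell boundary.\<close>

definition cell_of_unit :: "nat \<Rightarrow> nat" where "cell_of_unit j = (j + 1) div 2"

definition unit_share :: "nat \<Rightarrow> nat \<Rightarrow> real" where
  "unit_share N i = (if i = 0 \<or> i = N then 1 else 1/2)"

definition unit_mass :: "(real \<Rightarrow> real) \<Rightarrow> nat \<Rightarrow> nat \<Rightarrow> nat \<Rightarrow> real" where
  "unit_mass f N j k = cell_mass f N (cell_of_unit j) k * unit_share N (cell_of_unit j)"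

definition unit_start :: "(real \<Rightarrow> real) \<Rightarrow> nat \<Rightarrow> nat \<Rightarrow> nat" where
  "unit_start f N j = nat \<lfloor>real N * f (cell_bound N ((j + 2) div 2))\<rfloor>"

definition unit_bound :: "nat \<Rightarrow> nat \<Rightarrow> real" where "unit_bound N j = real j / (2 * real N)"

definition unit_map :: "(real \<Rightarrow> real) \<Rightarrow> nat \<Rightarrow> nat \<Rightarrow> real \<Rightarrow> real" where
  "unit_map f N j x =
     (let Z = zigzag N (unit_mass f N j) (cell_lo f N (cell_of_unit j)) (cell_hi f N (cell_of_unit j)) (unit_start f N j)
      in if odd j then Z (x - unit_bound N j) else Z (unit_bound N (Suc j) - x))"

definition approx_map :: "(real \<Rightarrow> real) \<Rightarrow> nat \<Rightarrow> real \<Rightarrow> real" where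
  "approx_map f N x = unit_map f N (min (2 * N - 1) (nat \<lfloor>2 * real N * x\<rfloor>)) x"

lemma cell_of_unit_le: "j < 2 * N \<Longrightarrow> cell_of_unit j \<le> N" unfolding cell_of_unit_def by linarith

lemma sum_units_aux:
  fixes F :: "nat \<Rightarrow> real"
  assumes n: "1 \<le> n"
  shows "(\<Sum>j<2*n. F (cell_of_unit j) * (if cell_of_unit j = 0 then 1 else 1/2)) = (\<Sum>i<n. F i) + F n / 2"
  using n
proof (induction n rule: dec_induct)
  case base
  show ?case by (simp add: numeral_2_eq_2 cell_of_unit_def)
next
  case (step n)
  have "cell_of_unit (2 * n) = n" "cell_of_unit (Suc (2 * n)) = Suc n" unfolding cell_of_unit_def by presburger+
  moreover have "2 * Suc n = Suc (Suc (2 * n))" by simp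
  ultimately show ?case using step by simp
qed

lemma sum_over_units:
  fixes F :: "nat \<Rightarrow> real"
  assumes n: "1 \<le> n"
  shows "(\<Sum>j<2*n. F (cell_of_unit j) * unit_share n (cell_of_unit j)) = (\<Sum>i\<le>n. F i)"
proof -
  define h where "h j = F (cell_of_unit j) * (if cell_of_unit j = 0 then 1 else 1/2)" for j
  have e: "2 * n = Suc (2 * n - 1)" using n by simp
  have last: "cell_of_unit (2 * n - 1) = n" unfolding cell_of_unit_def using n by simp
  have split: "(\<Sum>j<2*n. g j) = (\<Sum>j<2*n - 1. g j) + g (2*n - 1)" for g :: "nat \<Rightarrow> real"
    by (metis e sum.lessThan_Suc)
  have "cell_of_unit j < n" if "j < 2 * n - 1" for j using that unfolding cell_of_unit_def by linarith
  then have "(\<Sum>j<2*n - 1. F (cell_of_unit j) * unit_share n (cell_of_unit j)) = (\<Sum>j<2*n - 1. h j)"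
    unfolding h_def by (intro sum.cong) (auto simp: unit_share_def)
  moreover have "(\<Sum>j<2*n. F (cell_of_unit j) * unit_share n (cell_of_unit j))
      = (\<Sum>j<2*n - 1. F (cell_of_unit j) * unit_share n (cell_of_unit j)) + F n"
    using split last by (simp add: unit_share_def)
  moreover have "(\<Sum>j<2*n. h j) = (\<Sum>j<2*n - 1. h j) + F n / 2"
    using split[of h] last n by (simp add: h_def)
  ultimately show ?thesis using sum_units_aux[OF n] unfolding h_def by (simp add: lessThan_Suc_atMost[symmetric])
qed

context cell_partition
begin

lemma unit_bound_Suc: "unit_bound N (Suc j) = unit_bound N j + 1 / (2 * real N)"
  unfolding unit_bound_def using N by (simp add: field_simps)

lemma unit_bound_0: "unit_bound N 0 = 0" unfolding unit_bound_def by simp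

lemma unit_bound_last: "unit_bound N (2 * N) = 1" unfolding unit_bound_def using N by simp

lemma unit_subset_cell:
  assumes j: "j < 2 * N"
  shows "cell_bound N (cell_of_unit j) \<le> unit_bound N j" "unit_bound N (Suc j) \<le> cell_bound N (Suc (cell_of_unit j))"
proof -
  have "real (2 * cell_of_unit j) \<le> real j + 1" "real j \<le> real (2 * cell_of_unit j)"
    unfolding cell_of_unit_def by linarith+
  then have "(2 * real (cell_of_unit j) - 1) / (2 * real N) \<le> real j / (2 * real N)"
    "real (Suc j) / (2 * real N) \<le> (2 * real (Suc (cell_of_unit j)) - 1) / (2 * real N)"
    by (intro divide_right_mono; simp)+
  moreover have "real (Suc j) / (2 * real N) \<le> 1" using j N by (simp add: divide_le_eq)
  moreover have "0 \<le> real j / (2 * real N)" by simp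
  ultimately show "cell_bound N (cell_of_unit j) \<le> unit_bound N j" "unit_bound N (Suc j) \<le> cell_bound N (Suc (cell_of_unit j))"
    unfolding cell_bound_def unit_bound_def by (auto simp: min_le_iff_disj le_max_iff_disj)
qed

lemma unit_in_cell: "j < 2 * N \<Longrightarrow> x \<in> {unit_bound N j..unit_bound N (Suc j)} \<Longrightarrow> x \<in> cell N (cell_of_unit j)"
  using unit_subset_cell[of j] unfolding cell_def by auto

lemma unit_start_point: "cell_bound N ((j + 2) div 2) \<in> cell N (cell_of_unit j)"
proof -
  have "(j + 2) div 2 = cell_of_unit j \<or> (j + 2) div 2 = Suc (cell_of_unit j)" unfolding cell_of_unit_def by presburger
  then show ?thesis unfolding cell_def using cell_bound_mono by auto
qed

lemma unit_share_length: "i \<le> N \<Longrightarrow> (cell_bound N (Suc i) - cell_bound N i) * unit_share N i = 1 / (2 * real N)"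
  using cell_length unfolding unit_share_def by auto

lemma unit_start_bounds:
  assumes j: "j < 2 * N"
  shows "cell_lo f N (cell_of_unit j) \<le> unit_start f N j" "unit_start f N j \<le> Suc (cell_hi f N (cell_of_unit j))"
proof -
  have i: "cell_of_unit j \<le> N" using cell_of_unit_le[OF j] .
  define x where "x = cell_bound N ((j + 2) div 2)"
  have fx: "cell_min f N (cell_of_unit j) \<le> f x" "f x \<le> cell_max f N (cell_of_unit j)"
    using cell_min_max_bounds[OF i unit_start_point] unfolding x_def by auto
  have c0: "0 \<le> cell_min f N (cell_of_unit j)" using cell_min_max_range[OF i] by simp
  show "cell_lo f N (cell_of_unit j) \<le> unit_start f N j" unfolding cell_lo_def unit_start_def x_def[symmetric]
    using fx c0 N by (intro nat_mono floor_mono mult_left_mono) auto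
  have "real (unit_start f N j) \<le> real N * f x" unfolding unit_start_def x_def[symmetric] using fx c0 by simp
  also have "\<dots> \<le> real N * cell_max f N (cell_of_unit j)" using fx by (simp add: mult_left_mono)
  also have "\<dots> \<le> real (Suc (cell_hi f N (cell_of_unit j)))" by (rule cell_level_bounds(3)[OF i])
  finally show "unit_start f N j \<le> Suc (cell_hi f N (cell_of_unit j))" by (simp only: of_nat_le_iff)
qed

lemma zigzag_data_unit:
  assumes j: "j < 2 * N"
  shows "zigzag_data N (unit_mass f N j) (cell_lo f N (cell_of_unit j)) (cell_hi f N (cell_of_unit j)) (unit_start f N j)"
proof
  have i: "cell_of_unit j \<le> N" using cell_of_unit_le[OF j] .
  show "0 < unit_mass f N j k" if "cell_lo f N (cell_of_unit j) \<le> k" "k \<le> cell_hi f N (cell_of_unit j)" for k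
    unfolding unit_mass_def using cell_mass_pos[OF i that] by (auto simp: unit_share_def)
  have "unit_mass f N j k \<le> (cell_bound N (Suc (cell_of_unit j)) - cell_bound N (cell_of_unit j)) * unit_share N (cell_of_unit j)" for k
    unfolding unit_mass_def by (rule mult_right_mono[OF cell_mass_le[OF i]]) (auto simp: unit_share_def)
  then show "unit_mass f N j k \<le> 1 / (2 * real N)" for k using unit_share_length[OF i] by simp
qed (use N cell_level_bounds(5,6)[OF cell_of_unit_le[OF j]] unit_start_bounds[OF j] in auto)

lemma sum_unit_mass:
  assumes j: "j < 2 * N"
  shows "(\<Sum>k\<in>{cell_lo f N (cell_of_unit j)..<Suc (cell_hi f N (cell_of_unit j))}. unit_mass f N j k * F k)
    = (\<Sum>k<N. unit_mass f N j k * F k)"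
proof (rule sum.mono_neutral_left)
  have i: "cell_of_unit j \<le> N" using cell_of_unit_le[OF j] .
  show "{cell_lo f N (cell_of_unit j)..<Suc (cell_hi f N (cell_of_unit j))} \<subseteq> {..<N}"
    using cell_level_bounds(5)[OF i] by auto
  show "\<forall>k\<in>{..<N} - {cell_lo f N (cell_of_unit j)..<Suc (cell_hi f N (cell_of_unit j))}. unit_mass f N j k * F k = 0"
    using cell_mass_below[OF i] cell_mass_above[OF i] unfolding unit_mass_def by auto
qed simp

end

locale partition_unit = cell_partition +
  fixes j :: nat
  assumes j: "j < 2 * N"
begin

sublocale Z: zigzag_data N "unit_mass f N j" "cell_lo f N (cell_of_unit j)" "cell_hi f N (cell_of_unit j)"
  "unit_start f N j"
  by (rule zigzag_data_unit[OF j])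

lemma len_eq: "Z.len = 1 / (2 * real N)"
proof -
  have i: "cell_of_unit j \<le> N" using cell_of_unit_le[OF j] .
  have "Z.len = (\<Sum>k<N. unit_mass f N j k * 1)" using Z.len_eq sum_unit_mass[OF j, of "\<lambda>_. 1"] by simp
  also have "\<dots> = (\<Sum>k<N. cell_mass f N (cell_of_unit j) k) * unit_share N (cell_of_unit j)"
    unfolding unit_mass_def by (simp add: sum_distrib_right)
  also have "\<dots> = 1 / (2 * real N)" using sum_cell_mass_row[OF i] unit_share_length[OF i] by simp
  finally show ?thesis .
qed

lemma unit_bound_Suc_len: "unit_bound N (Suc j) = unit_bound N j + Z.len"
  using unit_bound_Suc len_eq by simp

abbreviation "Zj \<equiv> zigzag N (unit_mass f N j) (cell_lo f N (cell_of_unit j)) (cell_hi f N (cell_of_unit j)) (unit_start f N j)"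

lemma zigzag_ends: "Zj 0 = real (unit_start f N j) / real N" "Zj Z.len = real (cell_lo f N (cell_of_unit j)) / real N"
  using Z.zigzag_leg1[of 0] Z.zigzag_leg3[of Z.len] Z.leg1.quantile_mass Z.leg3.quantile_0
    Z.leg1.mass_nonneg Z.leg2_mass_pos Z.leg3_mass_pos by auto

lemma unit_map_ends:
  "unit_map f N j (unit_bound N j) =
     (if odd j then real (unit_start f N j) / real N else real (cell_lo f N (cell_of_unit j)) / real N)"
  "unit_map f N j (unit_bound N (Suc j)) =
     (if odd j then real (cell_lo f N (cell_of_unit j)) / real N else real (unit_start f N j) / real N)"
  unfolding unit_map_def Let_def unit_bound_Suc_len using zigzag_ends by simp_all

end

context cell_partition
begin

lemma unit_map_junction:
  assumes j: "Suc j < 2 * N"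
  shows "unit_map f N j (unit_bound N (Suc j)) = unit_map f N (Suc j) (unit_bound N (Suc j))"
proof -
  interpret U: partition_unit f N j using j by unfold_locales simp
  interpret U': partition_unit f N "Suc j" using j by unfold_locales
  show ?thesis
  proof (cases "odd j")
    case True
    then have "cell_of_unit (Suc j) = cell_of_unit j" unfolding cell_of_unit_def by presburger
    then show ?thesis using U.unit_map_ends U'.unit_map_ends True by simp
  next
    case False
    then have "(Suc j + 2) div 2 = (j + 2) div 2" by presburger
    then have "unit_start f N (Suc j) = unit_start f N j" unfolding unit_start_def by simp
    then show ?thesis using U.unit_map_ends U'.unit_map_ends False by simp
  qed
qed

lemma approx_map_on_unit:
  assumes j: "j < 2 * N" and x: "x \<in> {unit_bound N j..unit_bound N (Suc j)}"
  shows "approx_map f N x = unit_map f N j x"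
proof -
  have x': "real j \<le> 2 * real N * x" "2 * real N * x \<le> real j + 1"
    using x N unfolding unit_bound_def by (auto simp: field_simps)
  show ?thesis
  proof (cases "2 * real N * x < real j + 1")
    case True
    then have "\<lfloor>2 * real N * x\<rfloor> = int j" using x' by linarith
    then show ?thesis unfolding approx_map_def using j by simp
  next
    case False
    text \<open>At the right end point the map is defined by the next unit, which agrees there.\<close>
    then have e: "2 * real N * x = real j + 1" using x' by simp
    then have "nat \<lfloor>2 * real N * x\<rfloor> = Suc j" by simp
    moreover have "x = unit_bound N (Suc j)" using e N unfolding unit_bound_def by (simp add: field_simps)
    moreover have "2 * N - 1 = j" if "\<not> Suc j < 2 * N" using that j by simp
    ultimately show ?thesis
      unfolding approx_map_def using j unit_map_junction[of j] by (cases "Suc j < 2 * N") auto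
  qed
qed

end

context partition_unit
begin

lemma approx_map_unit:
  "continuous_on {unit_bound N j..unit_bound N (Suc j)} (approx_map f N)"
  "covered_by_laps (approx_map f N) N (unit_bound N j) (unit_bound N (Suc j)) Z.min_leg"
  "\<And>x. x \<in> {unit_bound N j..unit_bound N (Suc j)} \<Longrightarrow>
     approx_map f N x \<in> {real (cell_lo f N (cell_of_unit j)) / real N..real (Suc (cell_hi f N (cell_of_unit j))) / real N}"
  "measure lebesgue {x\<in>{unit_bound N j..unit_bound N (Suc j)}. approx_map f N x \<le> a}
     = (\<Sum>k<N. unit_mass f N j k * ramp (real N * a - real k))"
proof -
  have "\<forall>x\<in>{unit_bound N j..unit_bound N j + Z.len}.
      approx_map f N x = (if odd j then Zj (x - unit_bound N j) else Zj (unit_bound N j + Z.len - x))"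
    using approx_map_on_unit[OF j] unfolding unit_map_def unit_bound_Suc_len by simp
  note placed = Z.zigzag_placed[OF this, folded unit_bound_Suc_len]
  show "continuous_on {unit_bound N j..unit_bound N (Suc j)} (approx_map f N)"
    "covered_by_laps (approx_map f N) N (unit_bound N j) (unit_bound N (Suc j)) Z.min_leg"
    "\<And>x. x \<in> {unit_bound N j..unit_bound N (Suc j)} \<Longrightarrow>
     approx_map f N x \<in> {real (cell_lo f N (cell_of_unit j)) / real N..real (Suc (cell_hi f N (cell_of_unit j))) / real N}"
    using placed(1-3) by blast+
  show "measure lebesgue {x\<in>{unit_bound N j..unit_bound N (Suc j)}. approx_map f N x \<le> a}
     = (\<Sum>k<N. unit_mass f N j k * ramp (real N * a - real k))"
    unfolding placed(4)[of a] by (rule sum_unit_mass[OF j])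
qed

lemma zigzag_third_leg: "s \<in> {0..Z.leg3.mass} \<Longrightarrow> Zj (Z.len - s) = Z.leg3.Q s"
  using Z.zigzag_leg3[of "Z.len - s"] Z.leg1.mass_nonneg Z.leg2_mass_pos by simp

lemma approx_map_before_centre:
  assumes "odd j" and s: "s \<in> {0..Z.leg3.mass}"
  shows "approx_map f N (unit_bound N (Suc j) - s) = Z.leg3.Q s"
proof -
  have "unit_bound N (Suc j) - s \<in> {unit_bound N j..unit_bound N (Suc j)}"
    using s Z.leg1.mass_nonneg Z.leg2_mass_pos unfolding unit_bound_Suc_len by auto
  then have "approx_map f N (unit_bound N (Suc j) - s) = Zj (unit_bound N (Suc j) - s - unit_bound N j)"
    using approx_map_on_unit[OF j] \<open>odd j\<close> unfolding unit_map_def Let_def by simp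
  also have "unit_bound N (Suc j) - s - unit_bound N j = Z.len - s" unfolding unit_bound_Suc_len by simp
  finally show ?thesis using zigzag_third_leg[OF s] by simp
qed

lemma approx_map_after_centre:
  assumes "even j" and s: "s \<in> {0..Z.leg3.mass}"
  shows "approx_map f N (unit_bound N j + s) = Z.leg3.Q s"
proof -
  have "unit_bound N j + s \<in> {unit_bound N j..unit_bound N (Suc j)}"
    using s Z.leg1.mass_nonneg Z.leg2_mass_pos unfolding unit_bound_Suc_len by auto
  then have "approx_map f N (unit_bound N j + s) = Zj (unit_bound N (Suc j) - (unit_bound N j + s))"
    using approx_map_on_unit[OF j] \<open>even j\<close> unfolding unit_map_def Let_def by simp
  also have "unit_bound N (Suc j) - (unit_bound N j + s) = Z.len - s" unfolding unit_bound_Suc_len by simp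
  finally show ?thesis using zigzag_third_leg[OF s] by simp
qed

lemma leg3_mass_bounds: "0 < Z.leg3.mass" "Z.leg3.mass \<le> 1 / (2 * real N)"
  using Z.leg3_mass_pos len_eq Z.leg1.mass_nonneg Z.leg2_mass_pos by auto

end

context cell_partition
begin

lemma unit_cover:
  assumes x: "x \<in> unitI" obtains j where "j < 2 * N" "x \<in> {unit_bound N j..unit_bound N (Suc j)}"
proof
  define j where "j = min (2 * N - 1) (nat \<lfloor>2 * real N * x\<rfloor>)"
  show "j < 2 * N" unfolding j_def using N by simp
  have x2: "0 \<le> 2 * real N * x" "2 * real N * x \<le> 2 * real N" using x N by auto
  have "real j \<le> 2 * real N * x \<and> 2 * real N * x \<le> real j + 1"
  proof (cases "nat \<lfloor>2 * real N * x\<rfloor> \<le> 2 * N - 1")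
    case True
    then have "j = nat \<lfloor>2 * real N * x\<rfloor>" unfolding j_def by simp
    then show ?thesis using x2 by linarith
  next
    case False
    then have "j = 2 * N - 1" unfolding j_def by simp
    moreover have "real (2 * N - 1) + 1 = 2 * real N" using N by (simp add: of_nat_diff)
    ultimately show ?thesis using x2 False by linarith
  qed
  then show "x \<in> {unit_bound N j..unit_bound N (Suc j)}" unfolding unit_bound_def using N by (auto simp: field_simps)
qed

lemma Union_units: "(\<Union>j\<in>{..<2*N}. {unit_bound N j..unit_bound N (Suc j)}) = unitI"
proof
  show "(\<Union>j\<in>{..<2*N}. {unit_bound N j..unit_bound N (Suc j)}) \<subseteq> unitI"
  proof
    fix x assume "x \<in> (\<Union>j\<in>{..<2*N}. {unit_bound N j..unit_bound N (Suc j)})"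
    then obtain j where "j < 2 * N" "x \<in> {unit_bound N j..unit_bound N (Suc j)}" by blast
    then have "x \<in> cell N (cell_of_unit j)" by (rule unit_in_cell)
    then show "x \<in> unitI" using cell_subset by blast
  qed
  show "unitI \<subseteq> (\<Union>j\<in>{..<2*N}. {unit_bound N j..unit_bound N (Suc j)})"
  proof
    fix x assume "x \<in> unitI"
    then obtain j where "j < 2 * N" "x \<in> {unit_bound N j..unit_bound N (Suc j)}" by (rule unit_cover)
    then show "x \<in> (\<Union>j\<in>{..<2*N}. {unit_bound N j..unit_bound N (Suc j)})" by blast
  qed
qed

lemma continuous_on_approx_map: "continuous_on unitI (approx_map f N)"
proof -
  have "continuous_on {unit_bound N j..unit_bound N (Suc j)} (approx_map f N)" if "j < 2 * N" for j
  proof -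
    interpret partition_unit f N j using that by unfold_locales
    show ?thesis by (rule approx_map_unit(1))
  qed
  then have "continuous_on (\<Union>j\<in>{..<2*N}. {unit_bound N j..unit_bound N (Suc j)}) (approx_map f N)"
    by (intro continuous_on_closed_Union) auto
  then show ?thesis unfolding Union_units .
qed

lemma approx_map_maps: "approx_map f N ` unitI \<subseteq> unitI"
proof
  fix y assume "y \<in> approx_map f N ` unitI"
  then obtain x j where x: "y = approx_map f N x" "j < 2 * N" "x \<in> {unit_bound N j..unit_bound N (Suc j)}"
    by (auto elim!: unit_cover)
  interpret partition_unit f N j using x(2) by unfold_locales
  have "real (Suc (cell_hi f N (cell_of_unit j))) \<le> real N" using cell_level_bounds(5)[OF cell_of_unit_le[OF j]] by simp
  then have "real (Suc (cell_hi f N (cell_of_unit j))) / real N \<le> 1" using N by (simp add: divide_le_eq)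
  moreover have "0 \<le> real (cell_lo f N (cell_of_unit j)) / real N" by simp
  moreover have "real (cell_lo f N (cell_of_unit j)) / real N \<le> approx_map f N x"
    "approx_map f N x \<le> real (Suc (cell_hi f N (cell_of_unit j))) / real N"
    using approx_map_unit(3)[OF x(3)] by auto
  ultimately have "0 \<le> approx_map f N x" "approx_map f N x \<le> 1" by linarith+
  then show "y \<in> unitI" using x(1) by simp
qed

lemma approx_map_cdf:
  assumes a: "a \<in> unitI"
  shows "measure lebesgue {x\<in>unitI. approx_map f N x \<le> a} = a"
proof -
  have "measure lebesgue {x\<in>{unit_bound N 0..unit_bound N (2*N)}. approx_map f N x \<le> a}
      = (\<Sum>j<2*N. measure lebesgue {x\<in>{unit_bound N j..unit_bound N (Suc j)}. approx_map f N x \<le> a})"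
    by (rule measure_sublevel_chain) (use continuous_on_approx_map unit_bound_0 unit_bound_last unit_bound_Suc N in auto)
  also have "\<dots> = (\<Sum>j<2*N. \<Sum>k<N. unit_mass f N j k * ramp (real N * a - real k))"
  proof (rule sum.cong)
    fix j assume "j \<in> {..<2*N}"
    then interpret partition_unit f N j by unfold_locales simp
    show "measure lebesgue {x\<in>{unit_bound N j..unit_bound N (Suc j)}. approx_map f N x \<le> a}
      = (\<Sum>k<N. unit_mass f N j k * ramp (real N * a - real k))" by (rule approx_map_unit(4))
  qed simp
  also have "\<dots> = (\<Sum>k<N. ramp (real N * a - real k) * (\<Sum>j<2*N. unit_mass f N j k))"
    by (subst sum.swap) (simp add: sum_distrib_left mult.commute)
  also have "\<dots> = (\<Sum>k<N. ramp (real N * a - real k) * (1 / real N))"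
  proof (rule sum.cong)
    fix k assume k: "k \<in> {..<N}"
    have "(\<Sum>j<2*N. unit_mass f N j k) = (\<Sum>i\<le>N. cell_mass f N i k)"
      unfolding unit_mass_def by (rule sum_over_units[of N "\<lambda>i. cell_mass f N i k"]) (use N in auto)
    then show "ramp (real N * a - real k) * (\<Sum>j<2*N. unit_mass f N j k) = ramp (real N * a - real k) * (1 / real N)"
      using sum_cell_mass_column[of k] k by simp
  qed simp
  also have "\<dots> = (\<Sum>k\<in>{0..<N}. ramp (real N * a - real k)) / real N"
    by (simp add: sum_divide_distrib atLeast0LessThan)
  also have "\<dots> = a" using sum_ramp_shifts[of 0 N "real N * a"] a N by (simp add: max_def min_def)
  finally show ?thesis unfolding unit_bound_0 unit_bound_last .
qed

lemma approx_map_laps: "\<exists>\<gamma>>0. covered_by_laps (approx_map f N) N 0 1 \<gamma>"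
proof -
  have "\<forall>j\<in>{..<2*N}. \<exists>\<gamma>>0. covered_by_laps (approx_map f N) N (unit_bound N j) (unit_bound N (Suc j)) \<gamma>"
  proof
    fix j assume "j \<in> {..<2*N}"
    then interpret partition_unit f N j by unfold_locales simp
    show "\<exists>\<gamma>>0. covered_by_laps (approx_map f N) N (unit_bound N j) (unit_bound N (Suc j)) \<gamma>"
      using approx_map_unit(2) Z.min_leg_pos by blast
  qed
  then obtain \<Gamma> where \<Gamma>: "\<And>j. j < 2 * N \<Longrightarrow> \<Gamma> j > 0 \<and>
      covered_by_laps (approx_map f N) N (unit_bound N j) (unit_bound N (Suc j)) (\<Gamma> j)"
    by (metis bchoice lessThan_iff)
  define \<gamma> where "\<gamma> = Min (\<Gamma> ` {..<2*N})"
  have "0 \<in> {..<2*N}" using N by simp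
  then have "{..<2*N} \<noteq> {}" by blast
  then have "0 < \<gamma>" unfolding \<gamma>_def using \<Gamma> by (subst Min_gr_iff) auto
  moreover have "covered_by_laps (approx_map f N) N 0 1 \<gamma>" unfolding covered_by_laps_def
  proof
    fix y :: real assume "y \<in> {0..1}"
    then obtain j where j: "j < 2 * N" "y \<in> {unit_bound N j..unit_bound N (Suc j)}" by (rule unit_cover)
    have "\<gamma> \<le> \<Gamma> j" unfolding \<gamma>_def using j(1) by (intro Min_le) auto
    then have "covered_by_laps (approx_map f N) N (unit_bound N j) (unit_bound N (Suc j)) \<gamma>"
      using \<Gamma>[OF j(1)] covered_by_laps_mono by blast
    moreover have "0 \<le> unit_bound N j" "unit_bound N (Suc j) \<le> 1"
      using j(1) N unfolding unit_bound_def by (auto simp: divide_le_eq)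
    ultimately obtain a b where "unit_bound N j \<le> a" "a \<le> y" "y \<le> b" "b \<le> unit_bound N (Suc j)"
      "\<gamma> \<le> b - a" "expanding_lap (approx_map f N) N a b"
      using j(2) unfolding covered_by_laps_def by blast
    with \<open>0 \<le> unit_bound N j\<close> \<open>unit_bound N (Suc j) \<le> 1\<close>
    show "\<exists>a b. 0 \<le> a \<and> a \<le> y \<and> y \<le> b \<and> b \<le> 1 \<and> \<gamma> \<le> b - a \<and> expanding_lap (approx_map f N) N a b"
      by (intro exI[of _ a] exI[of _ b]) auto
  qed
  ultimately show ?thesis by blast
qed

abbreviation "fold_width j \<equiv>
  step_mass (leg3_weight (unit_mass f N j)) (cell_lo f N (cell_of_unit j)) (Suc (cell_hi f N (cell_of_unit j)))"

text \<open>Near an inner grid point \<open>k/N\<close> both adjacent units, \<open>2k-1\<close> and \<open>2k\<close>, run through the same third leg.\<close>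

lemma approx_map_symmetric_at_centre:
  assumes k: "0 < k" "k < N" and s: "s \<in> {0..fold_width (2 * k)}"
  shows "approx_map f N (real k / real N - s) = approx_map f N (real k / real N + s)"
proof -
  interpret L: partition_unit f N "2 * k - 1" using k by unfold_locales simp
  interpret R: partition_unit f N "2 * k" using k by unfold_locales simp
  have cell: "cell_of_unit (2 * k - 1) = k" "cell_of_unit (2 * k) = k" unfolding cell_of_unit_def using k by auto
  then have mass: "unit_mass f N (2 * k - 1) = unit_mass f N (2 * k)" unfolding unit_mass_def[abs_def] by simp
  have centre: "unit_bound N (Suc (2 * k - 1)) = real k / real N" "unit_bound N (2 * k) = real k / real N"
    unfolding unit_bound_def using k N by auto
  have "approx_map f N (real k / real N - s) = L.Z.leg3.Q s"
    using L.approx_map_before_centre[of s] s k centre unfolding mass cell by simp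
  also have "\<dots> = approx_map f N (real k / real N + s)"
    using R.approx_map_after_centre[of s] s k centre unfolding mass cell by simp
  finally show ?thesis .
qed

lemma approx_map_folds: "\<exists>w>0. folds_at_grid (approx_map f N) N w"
proof -
  define w where "w = Min (fold_width ` {..<2*N})"
  have width: "0 < fold_width j \<and> fold_width j \<le> 1 / (2 * real N)" if "j < 2 * N" for j
  proof -
    interpret partition_unit f N j using that by unfold_locales
    show ?thesis using leg3_mass_bounds by simp
  qed
  have "0 \<in> {..<2*N}" using N by simp
  then have "{..<2*N} \<noteq> {}" by blast
  then have "0 < w" unfolding w_def using width by (subst Min_gr_iff) auto
  moreover have "folds_at_grid (approx_map f N) N w" unfolding folds_at_grid_def
  proof (intro allI impI ballI)
    fix k x assume k: "0 < k \<and> k < N" and "x \<in> unitI" and xk: "\<bar>x - real k / real N\<bar> \<le> w"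
    have "w \<le> fold_width (2 * k)" unfolding w_def using k by (intro Min_le) auto
    then have near: "\<bar>x - real k / real N\<bar> \<le> fold_width (2 * k)" "\<bar>x - real k / real N\<bar> \<le> 1 / (2 * real N)"
      using xk width[of "2 * k"] k by auto
    have "1 / (2 * real N) \<le> real k / real N" "real k / real N + 1 / (2 * real N) \<le> 1"
      using k N by (auto simp: field_simps)
    then have "2 * (real k / real N) - x \<in> unitI" using near(2) by (auto simp: abs_le_iff)
    moreover have "approx_map f N (2 * (real k / real N) - x) = approx_map f N x"
    proof (cases "x \<le> real k / real N")
      case True
      then show ?thesis
        using approx_map_symmetric_at_centre[of k "real k / real N - x"] k near(1) by (simp add: abs_le_iff)
    next
      case False
      then show ?thesis
        using approx_map_symmetric_at_centre[of k "x - real k / real N"] k near(1) by (simp add: abs_le_iff)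
    qed
    ultimately show "2 * (real k / real N) - x \<in> unitI \<and> approx_map f N (2 * (real k / real N) - x) = approx_map f N x"
      by blast
  qed
  ultimately show ?thesis by blast
qed

lemma approx_map_in_LS_lambda: "approx_map f N \<in> LS_lambda"
proof -
  obtain \<gamma> w where "0 < \<gamma>" "covered_by_laps (approx_map f N) N 0 1 \<gamma>" "0 < w" "folds_at_grid (approx_map f N) N w"
    using approx_map_laps approx_map_folds by blast
  then have "laps_and_folds (approx_map f N) N \<gamma> w"
    using N continuous_on_approx_map approx_map_maps by unfold_locales
  then have "s_limit_shadowing (approx_map f N)" by (rule laps_and_folds.has_s_limit_shadowing)
  moreover have "lambda_preserving (approx_map f N)"
    by (rule lambda_preserving_if_cdf[OF continuous_on_approx_map approx_map_maps approx_map_cdf])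
  ultimately show ?thesis
    unfolding LS_lambda_def C_lambda_def using continuous_on_approx_map approx_map_maps by blast
qed

lemma cell_oscillation_le:
  assumes i: "i \<le> N" and uc: "\<And>x y. x \<in> unitI \<Longrightarrow> y \<in> unitI \<Longrightarrow> \<bar>x - y\<bar> \<le> 1 / real N \<Longrightarrow> \<bar>f x - f y\<bar> \<le> \<eta>"
  shows "cell_max f N i - cell_min f N i \<le> \<eta>"
proof -
  obtain x1 x2 where x12: "x1 \<in> cell N i" "f x1 = cell_min f N i" "x2 \<in> cell N i" "f x2 = cell_max f N i"
    using cell_min_max_attained[OF i] by blast
  have "\<bar>x2 - x1\<bar> \<le> cell_bound N (Suc i) - cell_bound N i" using x12 unfolding cell_def by (auto simp: abs_le_iff)
  also have "\<dots> \<le> 1 / real N" using cell_length[OF i] N by (auto simp: field_simps)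
  finally have "\<bar>f x2 - f x1\<bar> \<le> \<eta>" using uc x12 cell_subset by blast
  then show ?thesis using x12 by simp
qed

lemma approx_map_close:
  assumes uc: "\<And>x y. x \<in> unitI \<Longrightarrow> y \<in> unitI \<Longrightarrow> \<bar>x - y\<bar> \<le> 1 / real N \<Longrightarrow> \<bar>f x - f y\<bar> \<le> \<eta>"
    and x: "x \<in> unitI"
  shows "\<bar>f x - approx_map f N x\<bar> \<le> \<eta> + 1 / real N"
proof -
  obtain j where j_lt: "j < 2 * N" and x_unit: "x \<in> {unit_bound N j..unit_bound N (Suc j)}"
    using x by (rule unit_cover)
  interpret partition_unit f N j using j_lt by unfold_locales
  define i where "i = cell_of_unit j"
  have i: "i \<le> N" unfolding i_def using cell_of_unit_le[OF j_lt] .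
  have "x \<in> cell N i" unfolding i_def using j_lt x_unit by (rule unit_in_cell)
  then have "cell_min f N i \<le> f x" "f x \<le> cell_max f N i" using cell_min_max_bounds[OF i] by auto
  moreover have "real (cell_lo f N i) / real N \<le> approx_map f N x" "approx_map f N x \<le> real (Suc (cell_hi f N i)) / real N"
    using approx_map_unit(3)[OF x_unit] unfolding i_def by auto
  moreover have "(real N * cell_min f N i - 1) / real N < real (cell_lo f N i) / real N"
    "real (Suc (cell_hi f N i)) / real N < (real N * cell_max f N i + 1) / real N"
    using cell_level_bounds(2,4)[OF i] N by (intro divide_strict_right_mono; simp)+
  then have "cell_min f N i - 1 / real N < real (cell_lo f N i) / real N"
    "real (Suc (cell_hi f N i)) / real N < cell_max f N i + 1 / real N"
    using N by (simp_all add: diff_divide_distrib add_divide_distrib)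
  ultimately show ?thesis using cell_oscillation_le[OF i uc] by (auto simp: abs_le_iff)
qed

end

theorem mainTheorem9:
  shows "\<forall>f\<in>C_lambda. \<forall>\<epsilon>>0. \<exists>g\<in>LS_lambda. unif_dist f g < \<epsilon>"
proof (intro ballI allI impI)
  fix f :: "real \<Rightarrow> real" and \<epsilon> :: real
  assume f: "f \<in> C_lambda" and \<epsilon>: "\<epsilon> > 0"
  then have "uniformly_continuous_on unitI f"
    unfolding C_lambda_def by (auto intro: compact_uniformly_continuous)
  then obtain \<delta> where \<delta>: "\<delta> > 0" "\<And>x y. x \<in> unitI \<Longrightarrow> y \<in> unitI \<Longrightarrow> dist y x < \<delta> \<Longrightarrow> dist (f y) (f x) < \<epsilon> / 4"
    using \<epsilon> unfolding uniformly_continuous_on_def by (metis zero_less_divide_iff zero_less_numeral)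
  obtain N :: nat where N_pos: "N > 0" and N_small: "1 / real N < min \<delta> (\<epsilon> / 4)"
    using ex_inverse_of_nat_less[of "min \<delta> (\<epsilon> / 4)"] \<delta>(1) \<epsilon> by (auto simp: inverse_eq_divide)
  interpret cell_partition f N using f N_pos by unfold_locales
  have "\<bar>f x - f y\<bar> \<le> \<epsilon> / 4" if "x \<in> unitI" "y \<in> unitI" "\<bar>x - y\<bar> \<le> 1 / real N" for x y
    using \<delta>(2)[OF that(2,1)] that(3) N_small by (simp add: dist_real_def abs_minus_commute)
  then have "\<bar>f x - approx_map f N x\<bar> \<le> \<epsilon> / 2" if "x \<in> unitI" for x
    using approx_map_close[OF _ that, of "\<epsilon> / 4"] N_small by fastforce
  then have "unif_dist f (approx_map f N) \<le> \<epsilon> / 2" unfolding unif_dist_def by (intro cSUP_least) auto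
  then show "\<exists>g\<in>LS_lambda. unif_dist f g < \<epsilon>" using approx_map_in_LS_lambda \<epsilon> by force
qed

end
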